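(* Let $H=-\varepsilon\Delta+V$ on $\ell^2(\mathbb{Z}^d)$ with $V$ a bounded real potential and $0<\varepsilon\leq\varepsilon_0$. There is a constant $C_{d,\varepsilon_0}$ depending only on $d,\varepsilon_0$ such that the following holds. Consider a box $\Lambda_L\subset\Theta\subset\mathbb{Z}^d$ with $L\geq200$, and let $(\varphi,\lambda)$ be an eigenpair for $H_{\Lambda_L}$ (i.e. $\varphi\in\ell^2(\Lambda_L)$, $\|\varphi\|=1$, $H_{\Lambda_L}\varphi=\lambda\varphi$; $\varphi$ is extended by zero to $\Theta$). Then: (i) Given $\widetilde\theta>0$, if $\varphi$ is $(x,\widetilde\theta)$-polynomially localized for some $x\in\Lambda_L^{\Theta,L'}$, then $\operatorname{dist}(\lambda,\sigma(H_\Theta))\leq\|(H_\Theta-\lambda)\varphi\|\leq C_{d,\varepsilon_0}L^{-(\widetilde\theta-\frac{d-1}{2})}$. (ii) Given $\widetilde s\in(0,1)$, if $\varphi$ is $(x,\widetilde s)$-subexponentially localized for some $x\in\Lambda_L^{\Theta,L'}$, then $\operatorname{dist}(\lambda,\sigma(H_\Theta))\leq\|(H_\Theta-\lambda)\varphi\|\leq\mathrm{e}^{-c_1L^{\widetilde s}}$ for some $c_1=c_1(L)\geq1-C_{d,\varepsilon_0}\frac{\log L}{L^{\widetilde s}}$. (iii) Given $m>0$ and $\tau\in(0,1)$, if $\varphi$ is $(x,m)$-localized for some $x\in\Lambda_L^{\Theta,L_\tau}$, then $\operatorname{dist}(\lambda,\sigma(H_\Theta))\leq\|(H_\Theta-\lambda)\varphi\|\leq\mathrm{e}^{-m_1L_\tau}$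 for some $m_1=m_1(L)\geq m-C_{d,\varepsilon_0}\frac{\log L}{L_\tau}$.
   Context: $(\Delta\varphi)(x)=\sum_{|y-x|=1}\varphi(y)$. $\|x\|=\max_j|x_j|$, $\operatorname{dist}(x,\Xi)=\inf_{y\in\Xi}\|y-x\|$. Box: $\Lambda_L=\Lambda_L(a)=\{y\in\mathbb{Z}^d:\|y-a\|\leq L/2\}$ for some $a\in\mathbb{R}^d$. For $\Theta\subset\mathbb{Z}^d$, $H_\Theta=\chi_\Theta H\chi_\Theta$ on $\ell^2(\Theta)$. $L'=\lfloor L/20\rfloor$, $L_\tau=\lfloor L^\tau\rfloor$. For $\Phi\subset\Theta$ and $t\geq1$, $\Phi^{\Theta,t}=\{y\in\Phi:\operatorname{dist}(y,\Theta\setminus\Phi)>\lfloor t\rfloor\}$. For $x\in\Lambda_L$ and normalized $\varphi\in\ell^2(\Lambda_L)$: $\varphi$ is $(x,\widetilde\theta)$-polynomially localized if $|\varphi(y)|\leq L^{-\widetilde\theta}$ for all $y\in\Lambda_L$ with $\|y-x\|\geq L'$; $(x,\widetilde s)$-subexponentially localized if $|\varphi(y)|\leq\mathrm{e}^{-L^{\widetilde s}}$ for all such $y$ with $\|y-x\|\geq L'$; $(x,m)$-localized if $|\varphi(y)|\leq\mathrm{e}^{-m\|y-x\|}$ for all $y\in\Lambda_L$ with $\|y-x\|\geq L_\tau$. *)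

theory Defs
  imports "HOL-Analysis.Analysis"
begin

text \<open>Lattice points of Z^d are functions 'd => int, with 'd a finite index type,
  d = CARD('d). Functions on Z^d are complex-valued.\<close>

type_synonym 'd pt = "'d \<Rightarrow> int"

definition supnorm :: "('d::finite) pt \<Rightarrow> int" where
  "supnorm x = Max (range (\<lambda>j. \<bar>x j\<bar>))"

definition lap :: "(('d::finite) pt \<Rightarrow> complex) \<Rightarrow> 'd pt \<Rightarrow> complex" where
  "lap \<phi> x = (\<Sum>y\<in>{y. (\<Sum>j\<in>UNIV. \<bar>y j - x j\<bar>) = 1}. \<phi> y)"

definition Hop :: "real \<Rightarrow> (('d::finite) pt \<Rightarrow> real) \<Rightarrow> ('d pt \<Rightarrow> complex) \<Rightarrow> 'd pt \<Rightarrow> complex" where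
  "Hop eps V \<phi> x = - complex_of_real eps * lap \<phi> x + complex_of_real (V x) * \<phi> x"

definition restr :: "'a set \<Rightarrow> ('a \<Rightarrow> complex) \<Rightarrow> 'a \<Rightarrow> complex" where
  "restr S f x = (if x \<in> S then f x else 0)"

definition Hrestr :: "real \<Rightarrow> (('d::finite) pt \<Rightarrow> real) \<Rightarrow> 'd pt set \<Rightarrow> ('d pt \<Rightarrow> complex) \<Rightarrow> 'd pt \<Rightarrow> complex" where
  "Hrestr eps V \<Theta> \<phi> = restr \<Theta> (Hop eps V (restr \<Theta> \<phi>))"

definition l2space :: "'a set \<Rightarrow> ('a \<Rightarrow> complex) set" where
  "l2space S = {f. (\<forall>y. y \<notin> S \<longrightarrow> f y = 0) \<and> (\<lambda>y. (cmod (f y))\<^sup>2) summable_on UNIV}"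

definition l2norm :: "('a \<Rightarrow> complex) \<Rightarrow> real" where
  "l2norm f = sqrt (infsum (\<lambda>y. (cmod (f y))\<^sup>2) UNIV)"

text \<open>Spectrum of H_Theta as a bounded operator on l^2(Theta): the set of z such that
  H_Theta - z is not invertible, i.e. not a bijection of l^2(Theta) onto itself
  (bounded inverse is automatic by the open mapping theorem).\<close>
definition spec :: "real \<Rightarrow> (('d::finite) pt \<Rightarrow> real) \<Rightarrow> 'd pt set \<Rightarrow> complex set" where
  "spec eps V \<Theta> = {z. \<not> bij_betw (\<lambda>f y. Hrestr eps V \<Theta> f y - z * f y) (l2space \<Theta>) (l2space \<Theta>)}"

definition box :: "real \<Rightarrow> (('d::finite) \<Rightarrow> real) \<Rightarrow> 'd pt set" where
  "box L a = {y. \<forall>j. \<bar>real_of_int (y j) - a j\<bar> \<le> L / 2}"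

definition Lprime :: "real \<Rightarrow> int" where
  "Lprime L = \<lfloor>L / 20\<rfloor>"

definition Ltau :: "real \<Rightarrow> real \<Rightarrow> int" where
  "Ltau L \<tau> = \<lfloor>L powr \<tau>\<rfloor>"

definition interior_pts :: "('d::finite) pt set \<Rightarrow> 'd pt set \<Rightarrow> real \<Rightarrow> 'd pt set" where
  "interior_pts \<Phi> \<Theta> t = {y \<in> \<Phi>. \<forall>z \<in> \<Theta> - \<Phi>. real_of_int (supnorm (z - y)) > real_of_int \<lfloor>t\<rfloor>}"

definition poly_loc :: "real \<Rightarrow> ('d::finite \<Rightarrow> real) \<Rightarrow> 'd pt \<Rightarrow> real \<Rightarrow> ('d pt \<Rightarrow> complex) \<Rightarrow> bool" where
  "poly_loc L a x \<theta> \<phi> \<longleftrightarrow> (\<forall>y \<in> box L a. supnorm (y - x) \<ge> Lprime L \<longrightarrow> cmod (\<phi> y) \<le> L powr (- \<theta>))"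

definition subexp_loc :: "real \<Rightarrow> ('d::finite \<Rightarrow> real) \<Rightarrow> 'd pt \<Rightarrow> real \<Rightarrow> ('d pt \<Rightarrow> complex) \<Rightarrow> bool" where
  "subexp_loc L a x s \<phi> \<longleftrightarrow> (\<forall>y \<in> box L a. supnorm (y - x) \<ge> Lprime L \<longrightarrow> cmod (\<phi> y) \<le> exp (- (L powr s)))"

definition exp_loc :: "real \<Rightarrow> ('d::finite \<Rightarrow> real) \<Rightarrow> real \<Rightarrow> 'd pt \<Rightarrow> real \<Rightarrow> ('d pt \<Rightarrow> complex) \<Rightarrow> bool" where
  "exp_loc L a \<tau> x m \<phi> \<longleftrightarrow> (\<forall>y \<in> box L a. supnorm (y - x) \<ge> Ltau L \<tau> \<longrightarrow> cmod (\<phi> y) \<le> exp (- m * real_of_int (supnorm (y - x))))"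

end

theory Submission
  imports Defs
begin

(* For an eigenfunction \<phi> of H on the box, the residual (H_\<Theta> - \<lambda>) \<phi> vanishes except on the outer
   boundary of the box, where it equals -\<epsilon> \<Delta>\<phi> and involves only values of \<phi> far from the
   localization centre. The outer boundary has at most d 2^d L^(d-1) points, so the residual is
   bounded by a constant times L^((d-1)/2) times the decay bound for \<phi>; the three regimes only
   differ in how this prefactor is absorbed.

   The distance from \<lambda> to the spectrum is controlled by Weyl's criterion. T = H_\<Theta> - \<lambda> is a
   bounded symmetric operator on the real Hilbert space of square-summable functions on \<Theta>. If
   \<kappa> is the infimum of |T u| over unit vectors, then \<kappa> \<le> |T \<phi>|, and Cauchy-Schwarz for the
   nonnegative form <(T^2 - \<kappa>^2) u, v> makes \<kappa> or -\<kappa> an approximate eigenvalue \<sigma>. Then T - \<sigma>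
   is not surjective: surjectivity and symmetry would give |<y, x>| \<le> K_y |(T - \<sigma>) x| for every y,
   which fails for y = \<Sum> 2^-j x_j built from almost orthonormal approximate eigenvectors x_j. *)

section \<open>Square-summable functions\<close>

definition square_summable :: "('a \<Rightarrow> complex) \<Rightarrow> bool" where
  "square_summable f \<longleftrightarrow> (\<lambda>y. (cmod (f y))\<^sup>2) summable_on UNIV"

lemma square_summable_zero: "square_summable (\<lambda>_. 0)"
  by (simp add: square_summable_def)

lemma square_summable_le:
  assumes f: "square_summable f" and le: "\<And>y. cmod (g y) \<le> B * cmod (f y)"
  shows "square_summable g"
  unfolding square_summable_def
proof (rule summable_on_comparison_test)
  show "(\<lambda>y. B\<^sup>2 * (cmod (f y))\<^sup>2) summable_on UNIV"
    using f unfolding square_summable_def by (rule summable_on_cmult_right)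
  show "(cmod (g y))\<^sup>2 \<le> B\<^sup>2 * (cmod (f y))\<^sup>2" for y
    using power_mono[OF le[of y] norm_ge_zero] by (simp add: power_mult_distrib)
qed simp

lemma square_summable_scale: "square_summable f \<Longrightarrow> square_summable (\<lambda>y. c * f y)"
  by (erule square_summable_le[where B = "cmod c"]) (simp add: norm_mult)

lemma cmod_add_sq_le: "(cmod (a + b))\<^sup>2 \<le> 2 * (cmod a)\<^sup>2 + 2 * (cmod b)\<^sup>2"
  by (smt (verit) norm_triangle_ineq norm_ge_zero power_mono sum_squares_bound power2_sum)

lemma square_summable_add:
  assumes f: "square_summable f" and g: "square_summable g"
  shows "square_summable (\<lambda>y. f y + g y)"
  unfolding square_summable_def
proof (rule summable_on_comparison_test)
  show "(\<lambda>y. 2 * (cmod (f y))\<^sup>2 + 2 * (cmod (g y))\<^sup>2) summable_on UNIV"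
    using f g unfolding square_summable_def by (intro summable_on_add summable_on_cmult_right)
qed (simp_all add: cmod_add_sq_le)

lemma square_summable_diff:
  "square_summable f \<Longrightarrow> square_summable g \<Longrightarrow> square_summable (\<lambda>y. f y - g y)"
  using square_summable_add[OF _ square_summable_scale[of g "-1"]] by simp

lemma square_summable_inner:
  assumes f: "square_summable f" and g: "square_summable g"
  shows "(\<lambda>y. Re (f y * cnj (g y))) summable_on UNIV"
proof -
  have le: "norm (Re (f y * cnj (g y))) \<le> ((cmod (f y))\<^sup>2 + (cmod (g y))\<^sup>2) * (1/2)" for y
  proof -
    have "\<bar>Re (f y * cnj (g y))\<bar> \<le> cmod (f y) * cmod (g y)"
      using abs_Re_le_cmod[of "f y * cnj (g y)"] by (simp add: norm_mult)
    also have "\<dots> \<le> ((cmod (f y))\<^sup>2 + (cmod (g y))\<^sup>2) * (1/2)"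
      using sum_squares_bound[of "cmod (f y)" "cmod (g y)"] by simp
    finally show ?thesis
      by simp
  qed
  have "(\<lambda>y. ((cmod (f y))\<^sup>2 + (cmod (g y))\<^sup>2) * (1/2)) summable_on UNIV"
    using f g unfolding square_summable_def by (intro summable_on_cmult_left summable_on_add)
  then have "(\<lambda>y. norm (Re (f y * cnj (g y)))) summable_on UNIV"
    by (rule summable_on_comparison_test) (use le in simp_all)
  then show ?thesis
    using summable_on_iff_abs_summable_on_real by blast
qed

(* A real Hilbert space with inner product Re (\<Sum> f * cnj g); real spectral parameters suffice
   because all operators considered are symmetric. *)
typedef 'a ell2 = "{f :: 'a \<Rightarrow> complex. square_summable f}"
  morphisms ell2_fun Abs_ell2
  using square_summable_zero by blast

setup_lifting type_definition_ell2

lemma square_summable_ell2_fun: "square_summable (ell2_fun f)"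
  using ell2_fun[of f] by simp

lemma ell2_eqI: "(\<And>y. ell2_fun f y = ell2_fun g y) \<Longrightarrow> f = g"
  by (simp add: ell2_fun_inject[symmetric] fun_eq_iff)

instantiation ell2 :: (type) real_vector
begin
lift_definition zero_ell2 :: "'a ell2" is "\<lambda>_. 0"
  by (simp add: square_summable_zero)
lift_definition plus_ell2 :: "'a ell2 \<Rightarrow> 'a ell2 \<Rightarrow> 'a ell2" is "\<lambda>f g y. f y + g y"
  by (simp add: square_summable_add)
lift_definition uminus_ell2 :: "'a ell2 \<Rightarrow> 'a ell2" is "\<lambda>f y. - f y"
  using square_summable_scale[of _ "-1"] by simp
lift_definition minus_ell2 :: "'a ell2 \<Rightarrow> 'a ell2 \<Rightarrow> 'a ell2" is "\<lambda>f g y. f y - g y"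
  by (simp add: square_summable_diff)
lift_definition scaleR_ell2 :: "real \<Rightarrow> 'a ell2 \<Rightarrow> 'a ell2" is "\<lambda>c f y. complex_of_real c * f y"
  by (simp add: square_summable_scale)
instance
  by standard (transfer; simp add: algebra_simps)+
end

lemma ell2_fun_zero [simp]: "ell2_fun 0 y = 0"
  by transfer simp
lemma ell2_fun_add [simp]: "ell2_fun (f + g) y = ell2_fun f y + ell2_fun g y"
  by transfer simp
lemma ell2_fun_diff [simp]: "ell2_fun (f - g) y = ell2_fun f y - ell2_fun g y"
  by transfer simp
lemma ell2_fun_scaleR [simp]: "ell2_fun (c *\<^sub>R f) y = complex_of_real c * ell2_fun f y"
  by transfer simp
lemma ell2_fun_sum: "ell2_fun (sum F A) y = (\<Sum>a\<in>A. ell2_fun (F a) y)"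
  by (induction A rule: infinite_finite_induct) auto

instantiation ell2 :: (type) real_inner
begin
definition inner_ell2 :: "'a ell2 \<Rightarrow> 'a ell2 \<Rightarrow> real" where
  "inner_ell2 f g = (\<Sum>\<^sub>\<infinity>y. Re (ell2_fun f y * cnj (ell2_fun g y)))"
definition norm_ell2 :: "'a ell2 \<Rightarrow> real" where
  "norm_ell2 f = l2norm (ell2_fun f)"
definition dist_ell2 :: "'a ell2 \<Rightarrow> 'a ell2 \<Rightarrow> real" where
  "dist_ell2 f g = norm (f - g)"
definition sgn_ell2 :: "'a ell2 \<Rightarrow> 'a ell2" where
  "sgn_ell2 f = f /\<^sub>R norm f"
definition uniformity_ell2 :: "('a ell2 \<times> 'a ell2) filter" where
  "uniformity_ell2 = (INF e\<in>{0<..}. principal {(x, y). dist x y < e})"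
definition open_ell2 :: "'a ell2 set \<Rightarrow> bool" where
  "open_ell2 U = (\<forall>x\<in>U. \<forall>\<^sub>F (x', y) in uniformity. x' = x \<longrightarrow> y \<in> U)"
instance
proof
  fix f g h :: "'a ell2" and r :: real
  have summable: "(\<lambda>y. Re (ell2_fun f y * cnj (ell2_fun g y))) summable_on UNIV" for f g :: "'a ell2"
    by (intro square_summable_inner square_summable_ell2_fun)
  have inner_self: "inner f f = (\<Sum>\<^sub>\<infinity>y. (cmod (ell2_fun f y))\<^sup>2)"
    unfolding inner_ell2_def by (simp add: complex_norm_square[symmetric])
  show "inner f g = inner g f"
    unfolding inner_ell2_def by (simp add: mult.commute)
  show "inner (f + g) h = inner f h + inner g h"
    unfolding inner_ell2_def by (subst infsum_add[OF summable summable, symmetric]) (simp add: distrib_right)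
  show "inner (r *\<^sub>R f) g = r * inner f g"
    unfolding inner_ell2_def by (subst infsum_cmult_right[OF summable, symmetric]) (simp add: mult.assoc)
  show "0 \<le> inner f f"
    unfolding inner_self by (rule infsum_nonneg) simp
  show "inner f f = 0 \<longleftrightarrow> f = 0"
  proof
    assume "inner f f = 0"
    then have "(cmod (ell2_fun f y))\<^sup>2 = 0" for y
      using square_summable_ell2_fun[of f] unfolding inner_self square_summable_def
      by (intro nonneg_infsum_le_0D[of _ UNIV]) auto
    then show "f = 0"
      by (intro ell2_eqI) simp
  qed (simp add: inner_ell2_def)
  show "norm f = sqrt (inner f f)"
    unfolding inner_self norm_ell2_def l2norm_def ..
qed (simp_all add: dist_ell2_def sgn_ell2_def uniformity_ell2_def open_ell2_def)
end

lemma norm_ell2_sq: "(norm f)\<^sup>2 = (\<Sum>\<^sub>\<infinity>y. (cmod (ell2_fun f y))\<^sup>2)"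
  unfolding norm_ell2_def l2norm_def by (rule real_sqrt_pow2) (rule infsum_nonneg, simp)

lemma sum_sq_le_norm_sq: "finite F \<Longrightarrow> (\<Sum>y\<in>F. (cmod (ell2_fun f y))\<^sup>2) \<le> (norm f)\<^sup>2"
  unfolding norm_ell2_sq
  by (rule finite_sum_le_infsum) (use square_summable_ell2_fun[of f] in \<open>auto simp: square_summable_def\<close>)

lemma cmod_ell2_fun_le_norm: "cmod (ell2_fun f y) \<le> norm f"
proof (rule power2_le_imp_le)
  show "(cmod (ell2_fun f y))\<^sup>2 \<le> (norm f)\<^sup>2"
    using sum_sq_le_norm_sq[of "{y}" f] by simp
qed simp

lemma norm_ell2_le:
  assumes "\<And>y. cmod (ell2_fun f y) \<le> B * cmod (ell2_fun g y)" "0 \<le> B"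
  shows "norm f \<le> B * norm g"
proof (rule power2_le_imp_le)
  have "(\<Sum>\<^sub>\<infinity>y. (cmod (ell2_fun f y))\<^sup>2) \<le> (\<Sum>\<^sub>\<infinity>y. B\<^sup>2 * (cmod (ell2_fun g y))\<^sup>2)"
  proof (rule infsum_mono)
    show "(\<lambda>y. (cmod (ell2_fun f y))\<^sup>2) summable_on UNIV"
         "(\<lambda>y. B\<^sup>2 * (cmod (ell2_fun g y))\<^sup>2) summable_on UNIV"
      using square_summable_ell2_fun[of f] square_summable_ell2_fun[of g]
      unfolding square_summable_def by (auto intro: summable_on_cmult_right)
    show "(cmod (ell2_fun f y))\<^sup>2 \<le> B\<^sup>2 * (cmod (ell2_fun g y))\<^sup>2" for y
      using power_mono[OF assms(1) norm_ge_zero] by (simp add: power_mult_distrib)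
  qed
  then show "(norm f)\<^sup>2 \<le> (B * norm g)\<^sup>2"
    unfolding norm_ell2_sq power_mult_distrib by (simp add: infsum_cmult_right')
qed (use assms(2) in simp)

lemma ell2_Cauchy_tail:
  fixes X :: "nat \<Rightarrow> 'a ell2"
  assumes Cauchy: "\<And>m n. N \<le> m \<Longrightarrow> N \<le> n \<Longrightarrow> norm (X m - X n) \<le> e"
    and lim: "\<And>y. (\<lambda>m. ell2_fun (X m) y) \<longlonglongrightarrow> g y" and "N \<le> n"
  shows "square_summable (\<lambda>y. ell2_fun (X n) y - g y)"
    and "(\<Sum>\<^sub>\<infinity>y. (cmod (ell2_fun (X n) y - g y))\<^sup>2) \<le> e\<^sup>2"
proof -
  have partial: "(\<Sum>y\<in>F. (cmod (ell2_fun (X n) y - g y))\<^sup>2) \<le> e\<^sup>2" if "finite F" for F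
  proof -
    have "(\<Sum>y\<in>F. (cmod (ell2_fun (X n) y - ell2_fun (X m) y))\<^sup>2) \<le> e\<^sup>2" if "N \<le> m" for m
    proof -
      have "(\<Sum>y\<in>F. (cmod (ell2_fun (X n) y - ell2_fun (X m) y))\<^sup>2) \<le> (norm (X n - X m))\<^sup>2"
        using sum_sq_le_norm_sq[OF \<open>finite F\<close>, of "X n - X m"] by simp
      also have "\<dots> \<le> e\<^sup>2"
        using Cauchy[OF \<open>N \<le> n\<close> that] by (simp add: power_mono)
      finally show ?thesis .
    qed
    moreover have "(\<lambda>m. \<Sum>y\<in>F. (cmod (ell2_fun (X n) y - ell2_fun (X m) y))\<^sup>2)
        \<longlonglongrightarrow> (\<Sum>y\<in>F. (cmod (ell2_fun (X n) y - g y))\<^sup>2)"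
      by (intro tendsto_intros lim)
    ultimately show ?thesis
      by (intro Lim_bounded[where M = N]) auto
  qed
  show summable: "square_summable (\<lambda>y. ell2_fun (X n) y - g y)"
    unfolding square_summable_def
    by (rule nonneg_bdd_above_summable_on) (auto intro!: bdd_aboveI partial)
  show "(\<Sum>\<^sub>\<infinity>y. (cmod (ell2_fun (X n) y - g y))\<^sup>2) \<le> e\<^sup>2"
    using summable unfolding square_summable_def by (rule infsum_le_finite_sums) (use partial in auto)
qed

lemma Cauchy_ell2_fun:
  fixes X :: "nat \<Rightarrow> 'a ell2"
  assumes "Cauchy X"
  shows "Cauchy (\<lambda>n. ell2_fun (X n) y)"
proof (rule CauchyI)
  fix e :: real
  assume "e > 0"
  with \<open>Cauchy X\<close> obtain M where "\<forall>m\<ge>M. \<forall>n\<ge>M. norm (X m - X n) < e"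
    unfolding Cauchy_iff by blast
  then show "\<exists>M. \<forall>m\<ge>M. \<forall>n\<ge>M. norm (ell2_fun (X m) y - ell2_fun (X n) y) < e"
    by (metis cmod_ell2_fun_le_norm ell2_fun_diff le_less_trans)
qed

instance ell2 :: (type) complete_space
proof
  fix X :: "nat \<Rightarrow> 'a ell2"
  assume "Cauchy X"
  have Cauchy_le: "\<exists>N. \<forall>m\<ge>N. \<forall>n\<ge>N. norm (X m - X n) \<le> e" if "e > 0" for e
  proof -
    obtain N where "\<forall>m\<ge>N. \<forall>n\<ge>N. norm (X m - X n) < e"
      using \<open>Cauchy X\<close> \<open>e > 0\<close> unfolding Cauchy_iff by blast
    then show ?thesis
      by (auto intro: less_imp_le)
  qed
  define g where "g y = lim (\<lambda>n. ell2_fun (X n) y)" for y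
  have lim: "(\<lambda>n. ell2_fun (X n) y) \<longlonglongrightarrow> g y" for y
    using Cauchy_ell2_fun[OF \<open>Cauchy X\<close>] by (simp add: g_def Cauchy_convergent_iff convergent_LIMSEQ_iff)
  obtain N1 where "\<forall>m\<ge>N1. \<forall>n\<ge>N1. norm (X m - X n) \<le> 1"
    using Cauchy_le[of 1] by auto
  then have "square_summable (\<lambda>y. ell2_fun (X N1) y - g y)"
    by (intro ell2_Cauchy_tail(1)[OF _ lim]) auto
  from square_summable_diff[OF square_summable_ell2_fun[of "X N1"] this]
  have G: "ell2_fun (Abs_ell2 g) = g"
    by (simp add: Abs_ell2_inverse)
  have "X \<longlonglongrightarrow> Abs_ell2 g"
  proof (rule LIMSEQ_I)
    fix r :: real
    assume "r > 0"
    then obtain N where N: "\<forall>m\<ge>N. \<forall>n\<ge>N. norm (X m - X n) \<le> r / 2"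
      using Cauchy_le[of "r/2"] by auto
    have "norm (X n - Abs_ell2 g) \<le> r / 2" if "N \<le> n" for n
    proof (rule power2_le_imp_le)
      show "(norm (X n - Abs_ell2 g))\<^sup>2 \<le> (r / 2)\<^sup>2"
        using ell2_Cauchy_tail(2)[OF _ lim that] N unfolding norm_ell2_sq by (simp add: G)
    qed (use \<open>r > 0\<close> in simp)
    moreover have "r / 2 < r"
      using \<open>r > 0\<close> by simp
    ultimately show "\<exists>N. \<forall>n\<ge>N. norm (X n - Abs_ell2 g) < r"
      by (meson le_less_trans)
  qed
  then show "convergent X"
    unfolding convergent_def by blast
qed

instance ell2 :: (type) banach ..

section \<open>Approximate eigenvalues of symmetric operators\<close>

lemma quadratic_nonneg_imp_discriminant:
  fixes a b c :: real
  assumes "0 \<le> c" and nonneg: "\<And>t. 0 \<le> a + 2 * b * t + c * t\<^sup>2"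
  shows "b\<^sup>2 \<le> a * c"
proof (cases "c = 0")
  case True
  have "b = 0"
  proof (rule ccontr)
    assume "b \<noteq> 0"
    have "0 \<le> a + 2 * b * (- (a + 1) / (2 * b))"
      using nonneg[of "- (a + 1) / (2 * b)"] True by simp
    also have "\<dots> = -1"
      using \<open>b \<noteq> 0\<close> by (simp add: field_simps)
    finally show False
      by simp
  qed
  with True show ?thesis
    by simp
next
  case False
  with \<open>0 \<le> c\<close> have "c > 0"
    by simp
  have "0 \<le> a + 2 * b * (- b / c) + c * (- b / c)\<^sup>2"
    by (rule nonneg)
  also have "\<dots> = a - b\<^sup>2 / c"
    using \<open>c > 0\<close> by (simp add: field_simps power2_eq_square)
  finally show ?thesis
    using \<open>c > 0\<close> by (simp add: field_simps)
qed

lemma inner_geometric_sum_lower_bound: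
  fixes x :: "nat \<Rightarrow> 'a::{real_inner,banach}"
  assumes unit: "\<And>j. norm (x j) = 1"
    and almost_orthogonal: "\<And>j. j \<noteq> k \<Longrightarrow> \<bar>inner (x j) (x k)\<bar> \<le> (1/2)^k / 8"
  shows "3/4 * (1/2)^k \<le> \<bar>inner (\<Sum>j. (1/2)^j *\<^sub>R x j) (x k)\<bar>"
proof -
  define y where "y = (\<Sum>j. (1/2::real)^j *\<^sub>R x j)"
  have "summable (\<lambda>j. (1/2::real)^j *\<^sub>R x j)"
    by (rule summable_norm_cancel) (simp add: unit summable_geometric)
  then have "(\<lambda>j. inner ((1/2)^j *\<^sub>R x j) (x k)) sums inner y (x k)"
    unfolding y_def by (intro bounded_linear.sums[OF bounded_linear_inner_left] summable_sums)
  from sums_diff[OF this sums_single[of k "\<lambda>_. (1/2::real)^k"]]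
  have error_sums: "(\<lambda>j. inner ((1/2)^j *\<^sub>R x j) (x k) - (if j = k then (1/2)^k else 0))
      sums (inner y (x k) - (1/2)^k)"
    by simp
  have error_le: "\<bar>inner ((1/2)^j *\<^sub>R x j) (x k) - (if j = k then (1/2)^k else 0)\<bar>
      \<le> (1/2)^j * ((1/2)^k / 8)" for j
    using unit[of k] almost_orthogonal[of j]
    by (cases "j = k") (simp_all add: power2_norm_eq_inner[symmetric] abs_mult mult_left_mono)
  have bound_sums: "(\<lambda>j. (1/2::real)^j * ((1/2)^k / 8)) sums (2 * ((1/2)^k / 8))"
    using sums_mult2[OF geometric_sums[of "1/2::real"], of "(1/2)^k / 8"] by simp
  have "inner y (x k) - (1/2)^k \<le> 2 * ((1/2)^k / 8)"
    by (rule sums_le[OF _ error_sums bound_sums]) (rule abs_le_D1[OF error_le])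
  moreover have "- (2 * ((1/2)^k / 8)) \<le> inner y (x k) - (1/2)^k"
    by (rule sums_le[OF _ sums_minus[OF bound_sums] error_sums]) (meson abs_le_D2 error_le minus_le_iff)
  ultimately show ?thesis
    unfolding y_def by simp
qed

lemma parallelogram_law:
  fixes a b :: "'a::real_inner"
  shows "(norm (a + b))\<^sup>2 + (norm (a - b))\<^sup>2 = 2 * (norm a)\<^sup>2 + 2 * (norm b)\<^sup>2"
  by (simp only: power2_norm_eq_inner inner_add_left inner_add_right inner_diff_left inner_diff_right)

locale symmetric_operator =
  fixes X :: "'a::{real_inner,banach} set" and T :: "'a \<Rightarrow> 'a"
  assumes closed_X: "closed X" and subspace_X: "subspace X"
    and maps_into: "u \<in> X \<Longrightarrow> T u \<in> X"
    and bounded_linear_T: "bounded_linear T"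
    and symmetric: "u \<in> X \<Longrightarrow> v \<in> X \<Longrightarrow> inner (T u) v = inner u (T v)"
begin

lemma shift: "symmetric_operator X (\<lambda>u. T u - \<sigma> *\<^sub>R u)"
proof (rule symmetric_operator.intro)
  show "T u - \<sigma> *\<^sub>R u \<in> X" if "u \<in> X" for u
    using that maps_into subspace_X by (intro subspace_diff subspace_scale)
  show "bounded_linear (\<lambda>u. T u - \<sigma> *\<^sub>R u)"
    by (rule bounded_linear_sub[OF bounded_linear_T bounded_linear_scaleR_right])
  show "inner (T u - \<sigma> *\<^sub>R u) v = inner u (T v - \<sigma> *\<^sub>R v)" if "u \<in> X" "v \<in> X" for u v
    using symmetric[OF that] by (simp add: inner_diff_left inner_diff_right)
qed (use closed_X subspace_X in auto)

lemma inner_le_norm_image_if_surj: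
  assumes surj: "X \<subseteq> T ` X" and "y \<in> X"
  shows "\<exists>K\<ge>0. \<forall>x\<in>X. \<bar>inner y x\<bar> \<le> K * norm (T x)"
proof -
  obtain z where "z \<in> X" "y = T z"
    using surj \<open>y \<in> X\<close> by blast
  then have "\<bar>inner y x\<bar> \<le> norm z * norm (T x)" if "x \<in> X" for x
    using symmetric[OF \<open>z \<in> X\<close> that] Cauchy_Schwarz_ineq2[of z "T x"] by simp
  then show ?thesis
    by (intro exI[of _ "norm z"]) simp
qed

lemma approx_kernel_vector_almost_orthogonal:
  assumes surj: "X \<subseteq> T ` X" and approx: "\<And>e. e > 0 \<Longrightarrow> \<exists>x\<in>X. norm x = 1 \<and> norm (T x) \<le> e"
    and "finite Y" "Y \<subseteq> X" "\<delta> > 0"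
  shows "\<exists>x\<in>X. norm x = 1 \<and> norm (T x) \<le> \<delta> \<and> (\<forall>y\<in>Y. \<bar>inner y x\<bar> \<le> \<delta>)"
proof -
  have "\<forall>y\<in>Y. \<exists>K\<ge>0. \<forall>x\<in>X. \<bar>inner y x\<bar> \<le> K * norm (T x)"
    using inner_le_norm_image_if_surj[OF surj] \<open>Y \<subseteq> X\<close> by blast
  then obtain K where K: "\<And>y. y \<in> Y \<Longrightarrow> K y \<ge> 0 \<and> (\<forall>x\<in>X. \<bar>inner y x\<bar> \<le> K y * norm (T x))"
    by metis
  define K0 where "K0 = 1 + sum K Y"
  have "0 \<le> sum K Y"
    using K by (simp add: sum_nonneg)
  then have "K0 > 0"
    by (simp add: K0_def)
  have K_le: "K y \<le> K0" if "y \<in> Y" for y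
  proof -
    have "K y \<le> sum K Y"
      using K \<open>finite Y\<close> that by (intro member_le_sum) auto
    then show ?thesis
      by (simp add: K0_def)
  qed
  obtain x where x: "x \<in> X" "norm x = 1" "norm (T x) \<le> min \<delta> (\<delta> / K0)"
    using approx[of "min \<delta> (\<delta> / K0)"] \<open>\<delta> > 0\<close> \<open>K0 > 0\<close> by auto
  have "\<bar>inner y x\<bar> \<le> \<delta>" if "y \<in> Y" for y
  proof -
    have "\<bar>inner y x\<bar> \<le> K y * norm (T x)"
      using K[OF that] x(1) by blast
    also have "\<dots> \<le> K0 * (\<delta> / K0)"
      using K[OF that] K_le[OF that] x(3) by (intro mult_mono) auto
    finally show ?thesis
      using \<open>K0 > 0\<close> by simp
  qed
  with x show ?thesis
    by auto
qed

lemma approx_kernel_sequence: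
  assumes surj: "X \<subseteq> T ` X" and approx: "\<And>e. e > 0 \<Longrightarrow> \<exists>x\<in>X. norm x = 1 \<and> norm (T x) \<le> e"
  obtains x where "\<And>k. x k \<in> X" "\<And>k. norm (x k) = 1" "\<And>k. norm (T (x k)) \<le> (1/8)^Suc k"
    "\<And>j k. j < k \<Longrightarrow> \<bar>inner (x j) (x k)\<bar> \<le> (1/8)^Suc k"
proof -
  define P where "P f k r \<longleftrightarrow> r \<in> X \<and> norm r = 1 \<and> norm (T r) \<le> (1/8)^Suc k \<and>
    (\<forall>j<k. \<bar>inner (f j) r\<bar> \<le> (1/8)^Suc k)" for f :: "nat \<Rightarrow> 'a" and k r
  have "\<exists>x. \<forall>k. P x k (x k)"
  proof (rule dependent_wellorder_choice)
    show "P f k r = P g k r" if "\<And>j. j < k \<Longrightarrow> f j = g j" for r f g k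
      using that by (simp add: P_def)
    show "\<exists>r. P f k r" if "\<And>j. j < k \<Longrightarrow> P f j (f j)" for f k
    proof -
      have "f ` {..<k} \<subseteq> X"
        using that by (auto simp: P_def)
      then show ?thesis
        using approx_kernel_vector_almost_orthogonal[OF surj approx, of "f ` {..<k}" "(1/8)^Suc k"]
        unfolding P_def by auto
    qed
  qed
  then show thesis
    using that unfolding P_def by blast
qed

lemma almost_orthonormal_approx_kernel_sequence:
  assumes surj: "X \<subseteq> T ` X" and approx: "\<And>e. e > 0 \<Longrightarrow> \<exists>x\<in>X. norm x = 1 \<and> norm (T x) \<le> e"
  obtains x where "\<And>k. x k \<in> X" "\<And>k. norm (x k) = 1" "\<And>k. norm (T (x k)) \<le> (1/8)^k"
    "\<And>j k. j \<noteq> k \<Longrightarrow> \<bar>inner (x j) (x k)\<bar> \<le> (1/2)^k / 8"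
proof -
  obtain x where x: "\<And>k. x k \<in> X" "\<And>k. norm (x k) = 1" "\<And>k. norm (T (x k)) \<le> (1/8)^Suc k"
    "\<And>j k. j < k \<Longrightarrow> \<bar>inner (x j) (x k)\<bar> \<le> (1/8)^Suc k"
    using approx_kernel_sequence[OF surj approx] by blast
  have small: "(1/8::real)^Suc j \<le> (1/2)^k / 8" if "k \<le> j" for j k
  proof -
    have "(1/8::real)^Suc j \<le> (1/8)^Suc k"
      using that by (intro power_decreasing) auto
    also have "(1/8::real)^k \<le> (1/2)^k"
      by (rule power_mono) auto
    then have "(1/8::real)^Suc k \<le> (1/2)^k / 8"
      by simp
    finally show ?thesis .
  qed
  show thesis
  proof (rule that)
    show "x k \<in> X" "norm (x k) = 1" for k
      using x by simp_all
    show "norm (T (x k)) \<le> (1/8)^k" for k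
      using order_trans[OF x(3) power_decreasing[of k "Suc k" "1/8::real"]] by simp
    show "\<bar>inner (x j) (x k)\<bar> \<le> (1/2)^k / 8" if "j \<noteq> k" for j k
    proof -
      have "\<bar>inner (x j) (x k)\<bar> \<le> (1/8)^Suc (max j k)"
        using x(4)[of j k] x(4)[of k j] that by (cases "j < k") (auto simp: inner_commute max_def)
      also have "\<dots> \<le> (1/2)^k / 8"
        by (rule small) simp
      finally show ?thesis .
    qed
  qed
qed

lemma not_surj_if_approx_kernel:
  assumes approx: "\<And>e. e > 0 \<Longrightarrow> \<exists>x\<in>X. norm x = 1 \<and> norm (T x) \<le> e"
  shows "\<not> X \<subseteq> T ` X"
proof
  assume surj: "X \<subseteq> T ` X"
  obtain x where x: "\<And>k. x k \<in> X" "\<And>k. norm (x k) = 1" "\<And>k. norm (T (x k)) \<le> (1/8)^k"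
    "\<And>j k. j \<noteq> k \<Longrightarrow> \<bar>inner (x j) (x k)\<bar> \<le> (1/2)^k / 8"
    using almost_orthonormal_approx_kernel_sequence[OF surj approx] by blast
  define y where "y = (\<Sum>j. (1/2::real)^j *\<^sub>R x j)"
  have "summable (\<lambda>j. (1/2::real)^j *\<^sub>R x j)"
    by (rule summable_norm_cancel) (simp add: x(2) summable_geometric)
  then have "(\<lambda>n. \<Sum>j<n. (1/2::real)^j *\<^sub>R x j) \<longlonglongrightarrow> y"
    unfolding y_def by (rule summable_LIMSEQ)
  moreover have "(\<Sum>j<n. (1/2::real)^j *\<^sub>R x j) \<in> X" for n
    by (intro subspace_sum subspace_scale subspace_X x(1))
  ultimately have "y \<in> X"
    by (rule closed_sequentially[OF closed_X, rotated])
  then obtain K where K: "K \<ge> 0" "\<And>z. z \<in> X \<Longrightarrow> \<bar>inner y z\<bar> \<le> K * norm (T z)"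
    using inner_le_norm_image_if_surj[OF surj] by blast
  obtain k where k: "K * (4/3) < 4^k"
    using real_arch_pow[of 4 "K * (4/3)"] by auto
  have "3/4 * 4^k * (1/8::real)^k = 3/4 * (1/2)^k"
    by (simp add: power_mult_distrib[symmetric])
  also have "3/4 * (1/2)^k \<le> \<bar>inner y (x k)\<bar>"
    unfolding y_def by (rule inner_geometric_sum_lower_bound) (use x in auto)
  also have "\<dots> \<le> K * norm (T (x k))"
    using K(2) x(1) by blast
  also have "\<dots> \<le> K * (1/8)^k"
    using x(3) K(1) by (rule mult_left_mono)
  finally have "3/4 * 4^k \<le> K"
    by (rule mult_right_le_imp_le) simp
  with k show False
    by linarith
qed

lemma lower_form_Cauchy_Schwarz:
  assumes lower: "\<And>u. u \<in> X \<Longrightarrow> \<kappa> * norm u \<le> norm (T u)" and "0 \<le> \<kappa>"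
    and "u \<in> X" "v \<in> X"
  shows "(inner (T u) (T v) - \<kappa>\<^sup>2 * inner u v)\<^sup>2
    \<le> (inner (T u) (T u) - \<kappa>\<^sup>2 * inner u u) * (inner (T v) (T v) - \<kappa>\<^sup>2 * inner v v)"
proof -
  interpret T: linear T
    using bounded_linear_T by (rule bounded_linear.linear)
  define D where "D u v = inner (T u) (T v) - \<kappa>\<^sup>2 * inner u v" for u v
  have D_nonneg: "0 \<le> D w w" if "w \<in> X" for w
  proof -
    have "(\<kappa> * norm w)\<^sup>2 \<le> (norm (T w))\<^sup>2"
      using lower[OF that] \<open>0 \<le> \<kappa>\<close> by (intro power_mono) auto
    then show ?thesis
      by (simp add: D_def power2_norm_eq_inner power_mult_distrib)
  qed
  have "(D u v)\<^sup>2 \<le> D u u * D v v"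
  proof (rule quadratic_nonneg_imp_discriminant)
    show "0 \<le> D v v"
      using D_nonneg[OF \<open>v \<in> X\<close>] .
    fix t :: real
    have "0 \<le> D (u + t *\<^sub>R v) (u + t *\<^sub>R v)"
      using \<open>u \<in> X\<close> \<open>v \<in> X\<close> subspace_X by (intro D_nonneg subspace_add subspace_scale)
    also have "\<dots> = D u u + 2 * D u v * t + D v v * t\<^sup>2"
      unfolding D_def T.add T.scale
      by (simp add: inner_add_left inner_add_right inner_commute algebra_simps power2_eq_square)
    finally show "0 \<le> D u u + 2 * D u v * t + D v v * t\<^sup>2" .
  qed
  then show ?thesis
    by (simp add: D_def)
qed

lemma sq_residual_bound:
  assumes lower: "\<And>u. u \<in> X \<Longrightarrow> \<kappa> * norm u \<le> norm (T u)" and "0 \<le> \<kappa>"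
    and bound: "\<And>u. norm (T u) \<le> M * norm u"
    and "\<psi> \<in> X" "norm \<psi> = 1"
  shows "(norm (T (T \<psi>) - \<kappa>\<^sup>2 *\<^sub>R \<psi>))\<^sup>2 \<le> ((norm (T \<psi>))\<^sup>2 - \<kappa>\<^sup>2) * M\<^sup>2"
proof -
  define p where "p = T (T \<psi>) - \<kappa>\<^sup>2 *\<^sub>R \<psi>"
  have "T \<psi> \<in> X" "p \<in> X"
    unfolding p_def using \<open>\<psi> \<in> X\<close> maps_into subspace_X by (auto intro: subspace_diff subspace_scale)
  have "inner (T \<psi>) (T p) - \<kappa>\<^sup>2 * inner \<psi> p = (norm p)\<^sup>2"
    using symmetric[OF \<open>T \<psi> \<in> X\<close> \<open>p \<in> X\<close>]
    by (simp add: p_def power2_norm_eq_inner inner_diff_left)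
  moreover have "inner (T p) (T p) - \<kappa>\<^sup>2 * inner p p \<le> M\<^sup>2 * (norm p)\<^sup>2"
  proof -
    have "inner (T p) (T p) - \<kappa>\<^sup>2 * inner p p \<le> (norm (T p))\<^sup>2"
      by (simp add: power2_norm_eq_inner)
    also have "\<dots> \<le> (M * norm p)\<^sup>2"
      using bound[of p] by (intro power_mono) auto
    finally show ?thesis
      by (simp add: power_mult_distrib)
  qed
  moreover have "inner (T \<psi>) (T \<psi>) - \<kappa>\<^sup>2 * inner \<psi> \<psi> = (norm (T \<psi>))\<^sup>2 - \<kappa>\<^sup>2"
    using \<open>norm \<psi> = 1\<close> by (simp add: power2_norm_eq_inner[symmetric])
  moreover have "0 \<le> (norm (T \<psi>))\<^sup>2 - \<kappa>\<^sup>2"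
    using lower[OF \<open>\<psi> \<in> X\<close>] \<open>norm \<psi> = 1\<close> \<open>0 \<le> \<kappa>\<close> by (simp add: power_mono)
  ultimately have "((norm p)\<^sup>2)\<^sup>2 \<le> ((norm (T \<psi>))\<^sup>2 - \<kappa>\<^sup>2) * M\<^sup>2 * (norm p)\<^sup>2"
    using lower_form_Cauchy_Schwarz[OF lower \<open>0 \<le> \<kappa>\<close> \<open>\<psi> \<in> X\<close> \<open>p \<in> X\<close>]
    by (smt (verit, best) mult.assoc mult_left_mono)
  with \<open>0 \<le> (norm (T \<psi>))\<^sup>2 - \<kappa>\<^sup>2\<close> show ?thesis
    unfolding p_def[symmetric] by (cases "norm p = 0") (auto simp: power2_eq_square)
qed

lemma factor_sq_residual:
  assumes "\<psi> \<in> X" "norm \<psi> = 1" "0 \<le> \<kappa>"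
  shows "\<exists>\<sigma>\<in>{\<kappa>, -\<kappa>}. \<exists>w\<in>X. \<kappa> \<le> norm w \<and> T w - \<sigma> *\<^sub>R w = T (T \<psi>) - \<kappa>\<^sup>2 *\<^sub>R \<psi>"
proof -
  interpret T: linear T
    using bounded_linear_T by (rule bounded_linear.linear)
  define w_plus where "w_plus = T \<psi> + \<kappa> *\<^sub>R \<psi>"
  define w_minus where "w_minus = T \<psi> - \<kappa> *\<^sub>R \<psi>"
  have "w_plus \<in> X" "w_minus \<in> X"
    unfolding w_plus_def w_minus_def using \<open>\<psi> \<in> X\<close> maps_into subspace_X
    by (auto intro: subspace_add subspace_diff subspace_scale)
  have "T w_plus - \<kappa> *\<^sub>R w_plus = T (T \<psi>) - \<kappa>\<^sup>2 *\<^sub>R \<psi>"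
    "T w_minus - (- \<kappa>) *\<^sub>R w_minus = T (T \<psi>) - \<kappa>\<^sup>2 *\<^sub>R \<psi>"
    unfolding w_plus_def w_minus_def T.add T.diff T.scale by (simp_all add: algebra_simps power2_eq_square)
  moreover have "\<kappa>\<^sup>2 \<le> (norm w_plus)\<^sup>2 \<or> \<kappa>\<^sup>2 \<le> (norm w_minus)\<^sup>2"
  proof -
    have "(norm w_plus)\<^sup>2 + (norm w_minus)\<^sup>2 = 2 * (norm (T \<psi>))\<^sup>2 + 2 * \<kappa>\<^sup>2"
      unfolding w_plus_def w_minus_def parallelogram_law using \<open>norm \<psi> = 1\<close> by simp
    then show ?thesis
      by (smt (verit) zero_le_power2)
  qed
  then have "\<kappa> \<le> norm w_plus \<or> \<kappa> \<le> norm w_minus"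
    by (meson norm_ge_zero power2_le_imp_le)
  ultimately show ?thesis
    using \<open>w_plus \<in> X\<close> \<open>w_minus \<in> X\<close> by blast
qed

lemma normalize_approx_eigenvector:
  assumes "w \<in> X" "0 < \<kappa>" "\<kappa> \<le> norm w" "norm (T w - \<sigma> *\<^sub>R w) \<le> e * \<kappa>"
  shows "\<exists>x\<in>X. norm x = 1 \<and> norm (T x - \<sigma> *\<^sub>R x) \<le> e"
proof -
  interpret T: linear T
    using bounded_linear_T by (rule bounded_linear.linear)
  from assms have "norm w > 0"
    by linarith
  define x where "x = w /\<^sub>R norm w"
  have "x \<in> X" "norm x = 1"
    unfolding x_def using \<open>w \<in> X\<close> \<open>norm w > 0\<close> subspace_X by (simp_all add: subspace_scale)
  have "T x - \<sigma> *\<^sub>R x = (T w - \<sigma> *\<^sub>R w) /\<^sub>R norm w"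
    unfolding x_def T.scale by (simp add: scaleR_diff_right)
  then have "norm (T x - \<sigma> *\<^sub>R x) = norm (T w - \<sigma> *\<^sub>R w) / norm w"
    using \<open>norm w > 0\<close> by (simp add: divide_inverse_commute)
  also have "\<dots> \<le> (e * \<kappa>) / \<kappa>"
    using assms order_trans[OF norm_ge_zero assms(4)] by (intro frac_le) auto
  also have "\<dots> = e"
    using \<open>0 < \<kappa>\<close> by simp
  finally show ?thesis
    using \<open>x \<in> X\<close> \<open>norm x = 1\<close> by blast
qed

lemma approx_eigenvalue_plus_or_minus:
  assumes lower: "\<And>u. u \<in> X \<Longrightarrow> \<kappa> * norm u \<le> norm (T u)" and "0 \<le> \<kappa>"
    and near: "\<And>t. t > 0 \<Longrightarrow> \<exists>u\<in>X. norm u = 1 \<and> norm (T u) < \<kappa> + t"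
    and "e > 0"
  shows "\<exists>\<sigma>\<in>{\<kappa>, -\<kappa>}. \<exists>x\<in>X. norm x = 1 \<and> norm (T x - \<sigma> *\<^sub>R x) \<le> e"
proof (cases "\<kappa> = 0")
  case True
  with near[OF \<open>e > 0\<close>] show ?thesis
    by fastforce
next
  case False
  with \<open>0 \<le> \<kappa>\<close> have "\<kappa> > 0"
    by simp
  obtain M where "M > 0" and bound: "\<And>u. norm (T u) \<le> M * norm u"
    using bounded_linear.pos_bounded[OF bounded_linear_T] by (auto simp: mult.commute)
  \<comment> \<open>\<open>t\<close> makes \<open>|T \<psi>|\<^sup>2 - \<kappa>\<^sup>2 \<le> \<delta>\<close>, hence a residual \<open>|T (T \<psi>) - \<kappa>\<^sup>2 \<psi>| \<le> e \<kappa>\<close>\<close>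
  define \<delta> where "\<delta> = (e * \<kappa> / M)\<^sup>2"
  define t where "t = min \<kappa> (\<delta> / (3 * \<kappa>))"
  have "\<delta> > 0" "t > 0"
    unfolding t_def \<delta>_def using \<open>e > 0\<close> \<open>\<kappa> > 0\<close> \<open>M > 0\<close> by simp_all
  then obtain \<psi> where \<psi>: "\<psi> \<in> X" "norm \<psi> = 1" "norm (T \<psi>) < \<kappa> + t"
    using near by blast
  have "(norm (T \<psi>))\<^sup>2 - \<kappa>\<^sup>2 \<le> (\<kappa> + t)\<^sup>2 - \<kappa>\<^sup>2"
    using \<psi>(3) by (intro diff_right_mono power_mono) auto
  also have "\<dots> = t * (2 * \<kappa> + t)"
    by (simp add: power2_eq_square algebra_simps)
  also have "\<dots> \<le> (\<delta> / (3 * \<kappa>)) * (3 * \<kappa>)"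
    using \<open>t > 0\<close> \<open>\<kappa> > 0\<close> unfolding t_def by (intro mult_mono) auto
  also have "\<dots> = \<delta>"
    using \<open>\<kappa> > 0\<close> by simp
  finally have "(norm (T (T \<psi>) - \<kappa>\<^sup>2 *\<^sub>R \<psi>))\<^sup>2 \<le> \<delta> * M\<^sup>2"
    using sq_residual_bound[OF lower \<open>0 \<le> \<kappa>\<close> bound \<psi>(1,2)] by (smt (verit) mult_right_mono zero_le_power2)
  also have "\<dots> = (e * \<kappa>)\<^sup>2"
    using \<open>M > 0\<close> by (simp add: \<delta>_def power_divide)
  finally have residual: "norm (T (T \<psi>) - \<kappa>\<^sup>2 *\<^sub>R \<psi>) \<le> e * \<kappa>"
    by (rule power2_le_imp_le) (use \<open>e > 0\<close> \<open>\<kappa> > 0\<close> in simp)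
  obtain \<sigma> w where "\<sigma> \<in> {\<kappa>, -\<kappa>}" "w \<in> X" "\<kappa> \<le> norm w"
    and w: "T w - \<sigma> *\<^sub>R w = T (T \<psi>) - \<kappa>\<^sup>2 *\<^sub>R \<psi>"
    using factor_sq_residual[OF \<psi>(1,2) \<open>0 \<le> \<kappa>\<close>] by blast
  with residual show ?thesis
    using normalize_approx_eigenvector[of w \<kappa> \<sigma> e] \<open>\<kappa> > 0\<close> by auto
qed

lemma approx_eigenvalue_at_inf_norm:
  assumes lower: "\<And>u. u \<in> X \<Longrightarrow> \<kappa> * norm u \<le> norm (T u)" and "0 \<le> \<kappa>"
    and near: "\<And>t. t > 0 \<Longrightarrow> \<exists>u\<in>X. norm u = 1 \<and> norm (T u) < \<kappa> + t"
  shows "\<exists>\<sigma>\<in>{\<kappa>, -\<kappa>}. \<forall>e>0. \<exists>x\<in>X. norm x = 1 \<and> norm (T x - \<sigma> *\<^sub>R x) \<le> e"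
proof (rule ccontr)
  assume "\<not> ?thesis"
  then obtain e\<^sub>1 e\<^sub>2 where "e\<^sub>1 > 0" "\<forall>x\<in>X. norm x = 1 \<longrightarrow> e\<^sub>1 < norm (T x - \<kappa> *\<^sub>R x)"
    and "e\<^sub>2 > 0" "\<forall>x\<in>X. norm x = 1 \<longrightarrow> e\<^sub>2 < norm (T x - (- \<kappa>) *\<^sub>R x)"
    by (auto simp: not_le)
  then show False
    using approx_eigenvalue_plus_or_minus[OF lower \<open>0 \<le> \<kappa>\<close> near, of "min e\<^sub>1 e\<^sub>2"] by force
qed

lemma exists_spectral_point_near:
  assumes "\<phi> \<in> X" "norm \<phi> = 1"
  shows "\<exists>\<sigma>. \<bar>\<sigma>\<bar> \<le> norm (T \<phi>) \<and> \<not> X \<subseteq> (\<lambda>u. T u - \<sigma> *\<^sub>R u) ` X"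
proof -
  interpret T: linear T
    using bounded_linear_T by (rule bounded_linear.linear)
  define N where "N = {norm (T u) | u. u \<in> X \<and> norm u = 1}"
  define \<kappa> where "\<kappa> = Inf N"
  have "N \<noteq> {}" "bdd_below N"
    unfolding N_def using assms by (auto intro: bdd_belowI[of _ 0])
  have \<kappa>_le: "\<kappa> \<le> norm (T u)" if "u \<in> X" "norm u = 1" for u
    unfolding \<kappa>_def using \<open>bdd_below N\<close> that by (intro cInf_lower) (auto simp: N_def)
  have "0 \<le> \<kappa>"
    unfolding \<kappa>_def using \<open>N \<noteq> {}\<close> by (intro cInf_greatest) (auto simp: N_def)
  have lower: "\<kappa> * norm u \<le> norm (T u)" if "u \<in> X" for u
  proof (cases "u = 0")
    case False
    have "\<kappa> \<le> norm (T (u /\<^sub>R norm u))"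
      using False that subspace_X by (intro \<kappa>_le) (simp_all add: subspace_scale)
    with False show ?thesis
      by (simp add: T.scale field_simps)
  qed (simp add: T.zero)
  have near: "\<exists>u\<in>X. norm u = 1 \<and> norm (T u) < \<kappa> + t" if "t > 0" for t
    using cInf_lessD[OF \<open>N \<noteq> {}\<close>, of "\<kappa> + t"] that by (auto simp: \<kappa>_def N_def)
  obtain \<sigma> where "\<sigma> \<in> {\<kappa>, -\<kappa>}"
    and approx: "\<And>e. e > 0 \<Longrightarrow> \<exists>x\<in>X. norm x = 1 \<and> norm (T x - \<sigma> *\<^sub>R x) \<le> e"
    using approx_eigenvalue_at_inf_norm[OF lower \<open>0 \<le> \<kappa>\<close> near] by blast
  have "\<not> X \<subseteq> (\<lambda>u. T u - \<sigma> *\<^sub>R u) ` X"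
    by (rule symmetric_operator.not_surj_if_approx_kernel[OF shift approx])
  moreover have "\<bar>\<sigma>\<bar> \<le> norm (T \<phi>)"
    using \<open>\<sigma> \<in> {\<kappa>, -\<kappa>}\<close> \<kappa>_le[OF assms] \<open>0 \<le> \<kappa>\<close> by auto
  ultimately show ?thesis
    by blast
qed

end

section \<open>The lattice Hamiltonian on square-summable functions\<close>

lift_definition restrict_ell2 :: "'a set \<Rightarrow> 'a ell2 \<Rightarrow> 'a ell2" is restr
  unfolding restr_def by (erule square_summable_le[where B = 1]) simp

lemma ell2_fun_restrict_ell2: "ell2_fun (restrict_ell2 S f) = restr S (ell2_fun f)"
  by transfer simp

lemma bounded_linear_restrict_ell2: "bounded_linear (restrict_ell2 S)"
proof (rule bounded_linear_intro[where K = 1])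
  show "norm (restrict_ell2 S f) \<le> norm f * 1" for f
    using norm_ell2_le[of "restrict_ell2 S f" 1 f] by (simp add: ell2_fun_restrict_ell2 restr_def)
qed (auto intro!: ell2_eqI simp: ell2_fun_restrict_ell2 restr_def)

lemma restrict_ell2_symmetric: "inner (restrict_ell2 S f) g = inner f (restrict_ell2 S g)"
  unfolding inner_ell2_def ell2_fun_restrict_ell2 restr_def by (rule infsum_cong) simp

(* An unbounded potential does not define an operator on square-summable functions; the
   multiplication operator is then set to 0, which never matters below. *)
lift_definition mult_ell2 :: "('a \<Rightarrow> real) \<Rightarrow> 'a ell2 \<Rightarrow> 'a ell2" is
  "\<lambda>V f x. if bounded (range V) then complex_of_real (V x) * f x else 0"
proof -
  fix V :: "'a \<Rightarrow> real" and f :: "'a \<Rightarrow> complex"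
  assume f: "square_summable f"
  show "square_summable (\<lambda>x. if bounded (range V) then complex_of_real (V x) * f x else 0)"
  proof (cases "bounded (range V)")
    case True
    then obtain B where "\<And>x. \<bar>V x\<bar> \<le> B"
      unfolding bounded_iff by auto
    with True show ?thesis
      by (intro square_summable_le[OF f, where B = B]) (simp add: norm_mult mult_right_mono)
  qed (simp add: square_summable_zero)
qed

lemma ell2_fun_mult_ell2:
  "bounded (range V) \<Longrightarrow> ell2_fun (mult_ell2 V f) x = complex_of_real (V x) * ell2_fun f x"
  by transfer simp

lemma mult_ell2_unbounded: "\<not> bounded (range V) \<Longrightarrow> mult_ell2 V f = 0"
  by transfer simp

lemma bounded_linear_mult_ell2: "bounded_linear (mult_ell2 V)"
proof (cases "bounded (range V)")
  case True
  then obtain B where B: "\<And>x. \<bar>V x\<bar> \<le> B"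
    unfolding bounded_iff by auto
  then have "0 \<le> B"
    by (meson abs_ge_zero order_trans)
  show ?thesis
  proof (rule bounded_linear_intro[where K = B])
    show "norm (mult_ell2 V f) \<le> norm f * B" for f
      using norm_ell2_le[of "mult_ell2 V f" B f] B \<open>0 \<le> B\<close> True
      by (simp add: ell2_fun_mult_ell2 norm_mult mult_right_mono mult.commute)
  qed (auto intro!: ell2_eqI simp: ell2_fun_mult_ell2 True algebra_simps)
next
  case False
  then have "mult_ell2 V = (\<lambda>_. 0)"
    by (simp add: mult_ell2_unbounded fun_eq_iff)
  then show ?thesis
    by (simp add: bounded_linear_zero)
qed

lemma mult_ell2_symmetric: "inner (mult_ell2 V f) g = inner f (mult_ell2 V g)"
  by (cases "bounded (range V)")
    (simp_all add: inner_ell2_def ell2_fun_mult_ell2 mult_ell2_unbounded algebra_simps)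

lemma bij_translate: "bij (\<lambda>x::'d \<Rightarrow> int. \<lambda>j. x j + e j)"
proof (rule bij_betwI')
  show "\<exists>x\<in>UNIV. y = (\<lambda>j. x j + e j)" for y :: "'d \<Rightarrow> int"
    by (rule bexI[of _ "\<lambda>j. y j - e j"]) auto
qed (auto simp: fun_eq_iff)

lift_definition shift_ell2 :: "('d \<Rightarrow> int) \<Rightarrow> ('d \<Rightarrow> int) ell2 \<Rightarrow> ('d \<Rightarrow> int) ell2" is
  "\<lambda>e f x. f (\<lambda>j. x j + e j)"
proof -
  fix e :: "'d \<Rightarrow> int" and f :: "('d \<Rightarrow> int) \<Rightarrow> complex"
  assume "square_summable f"
  then show "square_summable (\<lambda>x. f (\<lambda>j. x j + e j))"
    using summable_on_reindex_bij_betw[OF bij_translate[of e], of "\<lambda>y. (cmod (f y))\<^sup>2"]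
    by (simp add: square_summable_def)
qed

lemma ell2_fun_shift_ell2: "ell2_fun (shift_ell2 e f) x = ell2_fun f (\<lambda>j. x j + e j)"
  by transfer simp

lemma norm_shift_ell2: "norm (shift_ell2 e f) = norm f"
  unfolding norm_ell2_def l2norm_def ell2_fun_shift_ell2
  using infsum_reindex_bij_betw[OF bij_translate[of e], of "\<lambda>y. (cmod (ell2_fun f y))\<^sup>2"] by simp

lemma bounded_linear_shift_ell2: "bounded_linear (shift_ell2 e)"
  by (rule bounded_linear_intro[where K = 1])
    (auto intro!: ell2_eqI simp: ell2_fun_shift_ell2 norm_shift_ell2)

lemma shift_ell2_adjoint: "inner (shift_ell2 e f) g = inner f (shift_ell2 (\<lambda>j. - e j) g)"
  unfolding inner_ell2_def ell2_fun_shift_ell2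
  using infsum_reindex_bij_betw[OF bij_translate[of e],
      of "\<lambda>y. Re (ell2_fun f y * cnj (ell2_fun g (\<lambda>j. y j - e j)))"]
  by simp

definition unit_steps :: "('d::finite \<Rightarrow> int) set" where
  "unit_steps = {e. (\<Sum>j\<in>UNIV. \<bar>e j\<bar>) = 1}"

lemma abs_le_one_if_unit_step: "e \<in> unit_steps \<Longrightarrow> \<bar>e j\<bar> \<le> 1"
  unfolding unit_steps_def using member_le_sum[of j UNIV "\<lambda>j. \<bar>e j\<bar>"] by auto

lemma neg_unit_step: "e \<in> unit_steps \<Longrightarrow> (\<lambda>j. - e j) \<in> unit_steps"
  by (simp add: unit_steps_def)

lemma lap_eq_sum_unit_steps: "lap \<phi> x = (\<Sum>e\<in>unit_steps. \<phi> (\<lambda>j. x j + e j))"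
proof -
  have "{y. (\<Sum>j\<in>UNIV. \<bar>y j - x j\<bar>) = 1} = (\<lambda>e j. x j + e j) ` unit_steps"
  proof (intro set_eqI iffI)
    fix y
    assume "y \<in> {y. (\<Sum>j\<in>UNIV. \<bar>y j - x j\<bar>) = 1}"
    then have "(\<lambda>j. y j - x j) \<in> unit_steps"
      by (simp add: unit_steps_def)
    then show "y \<in> (\<lambda>e j. x j + e j) ` unit_steps"
      by (auto intro!: image_eqI[of _ _ "\<lambda>j. y j - x j"])
  qed (auto simp: unit_steps_def)
  moreover have "inj_on (\<lambda>e j. x j + e j) unit_steps"
    by (auto simp: inj_on_def fun_eq_iff)
  ultimately show ?thesis
    unfolding lap_def by (simp add: sum.reindex)
qed

definition lap_ell2 :: "('d::finite \<Rightarrow> int) ell2 \<Rightarrow> ('d \<Rightarrow> int) ell2" where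
  "lap_ell2 f = (\<Sum>e\<in>unit_steps. shift_ell2 e f)"

lemma ell2_fun_lap_ell2: "ell2_fun (lap_ell2 f) = lap (ell2_fun f)"
  by (simp add: fun_eq_iff lap_ell2_def lap_eq_sum_unit_steps ell2_fun_sum ell2_fun_shift_ell2)

lemma bounded_linear_lap_ell2: "bounded_linear lap_ell2"
  unfolding lap_ell2_def[abs_def] by (intro bounded_linear_sum bounded_linear_shift_ell2)

lemma lap_ell2_symmetric: "inner (lap_ell2 f) g = inner f (lap_ell2 g)"
proof -
  have "inner (lap_ell2 f) g = (\<Sum>e\<in>unit_steps. inner f (shift_ell2 (\<lambda>j. - e j) g))"
    unfolding lap_ell2_def inner_sum_left shift_ell2_adjoint ..
  also have "\<dots> = (\<Sum>e\<in>unit_steps. inner f (shift_ell2 e g))"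
    by (rule sum.reindex_bij_betw, rule bij_betwI[where g = "\<lambda>e j. - e j"]) (auto simp: neg_unit_step)
  also have "\<dots> = inner f (lap_ell2 g)"
    unfolding lap_ell2_def inner_sum_right ..
  finally show ?thesis .
qed

definition ham_ell2 :: "real \<Rightarrow> (('d::finite) pt \<Rightarrow> real) \<Rightarrow> 'd pt set \<Rightarrow> 'd pt ell2 \<Rightarrow> 'd pt ell2" where
  "ham_ell2 eps V \<Theta> f =
    restrict_ell2 \<Theta> ((- eps) *\<^sub>R lap_ell2 (restrict_ell2 \<Theta> f) + mult_ell2 V (restrict_ell2 \<Theta> f))"

lemma ell2_fun_ham_ell2:
  "bounded (range V) \<Longrightarrow> ell2_fun (ham_ell2 eps V \<Theta> f) = Hrestr eps V \<Theta> (ell2_fun f)"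
  by (simp add: fun_eq_iff ham_ell2_def Hrestr_def Hop_def ell2_fun_restrict_ell2 ell2_fun_lap_ell2
      ell2_fun_mult_ell2 restr_def)

lemma bounded_linear_ham_ell2: "bounded_linear (ham_ell2 eps V \<Theta>)"
  unfolding ham_ell2_def[abs_def]
  by (intro bounded_linear_compose[OF bounded_linear_restrict_ell2] bounded_linear_add
      bounded_linear_compose[OF bounded_linear_scaleR_right]
      bounded_linear_compose[OF bounded_linear_lap_ell2]
      bounded_linear_compose[OF bounded_linear_mult_ell2] bounded_linear_restrict_ell2)

lemma ham_ell2_symmetric: "inner (ham_ell2 eps V \<Theta> f) g = inner f (ham_ell2 eps V \<Theta> g)"
  unfolding ham_ell2_def restrict_ell2_symmetric[of \<Theta> _ g] restrict_ell2_symmetric[of \<Theta> f, symmetric]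
  by (simp add: inner_diff_left inner_diff_right lap_ell2_symmetric mult_ell2_symmetric)

definition supported_ell2 :: "'a set \<Rightarrow> 'a ell2 set" where
  "supported_ell2 \<Theta> = {f. \<forall>y. y \<notin> \<Theta> \<longrightarrow> ell2_fun f y = 0}"

lemma subspace_supported_ell2: "subspace (supported_ell2 \<Theta>)"
  unfolding subspace_def supported_ell2_def by simp

lemma bounded_linear_ell2_fun_at: "bounded_linear (\<lambda>f. ell2_fun f y)"
  by (rule bounded_linear_intro[where K = 1]) (simp_all add: cmod_ell2_fun_le_norm scaleR_conv_of_real)

lemma closed_supported_ell2: "closed (supported_ell2 \<Theta>)"
proof -
  have "supported_ell2 \<Theta> = (\<Inter>y\<in>-\<Theta>. {f. ell2_fun f y = 0})"
    by (auto simp: supported_ell2_def)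
  moreover have "closed {f. ell2_fun f y = 0}" for y :: 'a
    by (intro closed_Collect_eq linear_continuous_on bounded_linear_ell2_fun_at continuous_on_const)
  ultimately show ?thesis
    by (simp add: closed_INT)
qed

lemma ell2_fun_in_l2space_iff: "ell2_fun f \<in> l2space \<Theta> \<longleftrightarrow> f \<in> supported_ell2 \<Theta>"
  using square_summable_ell2_fun[of f] by (simp add: l2space_def supported_ell2_def square_summable_def)

lemma symmetric_operator_ham_ell2: "symmetric_operator (supported_ell2 \<Theta>) (ham_ell2 eps V \<Theta>)"
proof (rule symmetric_operator.intro)
  show "ham_ell2 eps V \<Theta> u \<in> supported_ell2 \<Theta>" for u
    by (simp add: ham_ell2_def supported_ell2_def ell2_fun_restrict_ell2 restr_def)
qed (simp_all add: closed_supported_ell2 subspace_supported_ell2 bounded_linear_ham_ell2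
    ham_ell2_symmetric)

lemma real_in_spec_if_not_surj:
  assumes "bounded (range V)"
    and not_surj: "\<not> supported_ell2 \<Theta> \<subseteq> (\<lambda>u. ham_ell2 eps V \<Theta> u - z *\<^sub>R u) ` supported_ell2 \<Theta>"
  shows "complex_of_real z \<in> spec eps V \<Theta>"
proof -
  have "\<not> bij_betw (\<lambda>f y. Hrestr eps V \<Theta> f y - complex_of_real z * f y) (l2space \<Theta>) (l2space \<Theta>)"
  proof
    assume bij: "bij_betw (\<lambda>f y. Hrestr eps V \<Theta> f y - complex_of_real z * f y) (l2space \<Theta>) (l2space \<Theta>)"
    have "u \<in> (\<lambda>u. ham_ell2 eps V \<Theta> u - z *\<^sub>R u) ` supported_ell2 \<Theta>" if "u \<in> supported_ell2 \<Theta>" for u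
    proof -
      have "ell2_fun u \<in> (\<lambda>f y. Hrestr eps V \<Theta> f y - complex_of_real z * f y) ` l2space \<Theta>"
        using bij that by (simp add: bij_betw_def ell2_fun_in_l2space_iff)
      then obtain g where g: "g \<in> l2space \<Theta>" "ell2_fun u = (\<lambda>y. Hrestr eps V \<Theta> g y - complex_of_real z * g y)"
        by (rule imageE)
      then have "square_summable g"
        by (simp add: l2space_def square_summable_def)
      then have "ell2_fun (Abs_ell2 g) = g"
        by (simp add: Abs_ell2_inverse)
      with g have "Abs_ell2 g \<in> supported_ell2 \<Theta>" "u = ham_ell2 eps V \<Theta> (Abs_ell2 g) - z *\<^sub>R Abs_ell2 g"
        using ell2_fun_in_l2space_iff[of "Abs_ell2 g"]
        by (auto intro!: ell2_eqI simp: ell2_fun_ham_ell2[OF \<open>bounded (range V)\<close>])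
      then show ?thesis
        by blast
    qed
    with not_surj show False
      by blast
  qed
  then show ?thesis
    by (simp add: spec_def)
qed

theorem infdist_spec_le_residual:
  fixes V :: "('d::finite) pt \<Rightarrow> real"
  assumes "bounded (range V)" and supp: "\<forall>y. y \<notin> \<Theta> \<longrightarrow> \<phi> y = 0" and "l2norm \<phi> = 1"
  shows "infdist (complex_of_real lam) (spec eps V \<Theta>)
    \<le> l2norm (\<lambda>y. Hrestr eps V \<Theta> \<phi> y - complex_of_real lam * \<phi> y)"
proof -
  interpret H: symmetric_operator "supported_ell2 \<Theta>" "\<lambda>u. ham_ell2 eps V \<Theta> u - lam *\<^sub>R u"
    by (rule symmetric_operator.shift[OF symmetric_operator_ham_ell2])
  have "square_summable \<phi>"
    using \<open>l2norm \<phi> = 1\<close> infsum_not_exists by (force simp: l2norm_def square_summable_def)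
  then have p: "ell2_fun (Abs_ell2 \<phi>) = \<phi>"
    by (simp add: Abs_ell2_inverse)
  then have "Abs_ell2 \<phi> \<in> supported_ell2 \<Theta>" "norm (Abs_ell2 \<phi>) = 1"
    using supp \<open>l2norm \<phi> = 1\<close> by (simp_all add: supported_ell2_def norm_ell2_def)
  then obtain \<sigma> where \<sigma>: "\<bar>\<sigma>\<bar> \<le> norm (ham_ell2 eps V \<Theta> (Abs_ell2 \<phi>) - lam *\<^sub>R Abs_ell2 \<phi>)"
    and not_surj: "\<not> supported_ell2 \<Theta> \<subseteq>
      (\<lambda>u. (ham_ell2 eps V \<Theta> u - lam *\<^sub>R u) - \<sigma> *\<^sub>R u) ` supported_ell2 \<Theta>"
    using H.exists_spectral_point_near by blast
  have "(\<lambda>u. (ham_ell2 eps V \<Theta> u - lam *\<^sub>R u) - \<sigma> *\<^sub>R u) = (\<lambda>u. ham_ell2 eps V \<Theta> u - (lam + \<sigma>) *\<^sub>R u)"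
    by (simp add: fun_eq_iff scaleR_add_left)
  with not_surj have "complex_of_real (lam + \<sigma>) \<in> spec eps V \<Theta>"
    using real_in_spec_if_not_surj[OF \<open>bounded (range V)\<close>] by metis
  then have "infdist (complex_of_real lam) (spec eps V \<Theta>) \<le> dist (complex_of_real lam) (complex_of_real (lam + \<sigma>))"
    by (rule infdist_le)
  also have "\<dots> = \<bar>\<sigma>\<bar>"
    by (simp add: dist_norm)
  also have "\<dots> \<le> l2norm (\<lambda>y. Hrestr eps V \<Theta> \<phi> y - complex_of_real lam * \<phi> y)"
  proof -
    have "ell2_fun (ham_ell2 eps V \<Theta> (Abs_ell2 \<phi>) - lam *\<^sub>R Abs_ell2 \<phi>)
        = (\<lambda>y. Hrestr eps V \<Theta> \<phi> y - complex_of_real lam * \<phi> y)"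
      by (simp add: fun_eq_iff ell2_fun_ham_ell2[OF \<open>bounded (range V)\<close>] p)
    with \<sigma> show ?thesis
      by (simp add: norm_ell2_def)
  qed
  finally show ?thesis .
qed

section \<open>The residual of an eigenfunction localized in a box\<close>

definition int_ball :: "real \<Rightarrow> real \<Rightarrow> int set" where
  "int_ball c r = {k. \<bar>real_of_int k - c\<bar> \<le> r}"

lemma int_ball_subset_interval: "int_ball c r \<subseteq> {\<lceil>c - r\<rceil>..\<lfloor>c + r\<rfloor>}"
  by (auto simp: int_ball_def abs_le_iff ceiling_le_iff le_floor_iff)

lemma finite_int_ball: "finite (int_ball c r)"
  using int_ball_subset_interval by (rule finite_subset) simp

lemma card_int_ball_le:
  assumes "0 \<le> r"
  shows "real (card (int_ball c r)) \<le> 2 * r + 1"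
proof -
  have "card (int_ball c r) \<le> card {\<lceil>c - r\<rceil>..\<lfloor>c + r\<rfloor>}"
    by (rule card_mono[OF _ int_ball_subset_interval]) simp
  also have "\<dots> = nat (\<lfloor>c + r\<rfloor> - \<lceil>c - r\<rceil> + 1)"
    by simp
  finally have "real (card (int_ball c r)) \<le> real (nat (\<lfloor>c + r\<rfloor> - \<lceil>c - r\<rceil> + 1))"
    by linarith
  also have "\<dots> \<le> 2 * r + 1"
    using of_int_floor_le[of "c + r"] le_of_int_ceiling[of "c - r"] assms by linarith
  finally show ?thesis .
qed

lemma card_int_shell_le: "card (int_ball c (r + 1) - int_ball c r) \<le> 2"
proof -
  have "int_ball c (r + 1) - int_ball c r \<subseteq> {\<lfloor>c + r + 1\<rfloor>, \<lceil>c - r - 1\<rceil>}"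
  proof
    fix k
    assume k: "k \<in> int_ball c (r + 1) - int_ball c r"
    show "k \<in> {\<lfloor>c + r + 1\<rfloor>, \<lceil>c - r - 1\<rceil>}"
    proof (cases "real_of_int k - c > r")
      case True
      with k have "\<lfloor>c + r + 1\<rfloor> = k"
        by (intro floor_unique) (auto simp: int_ball_def abs_le_iff)
      then show ?thesis
        by simp
    next
      case False
      with k have "\<lceil>c - r - 1\<rceil> = k"
        by (intro ceiling_unique) (auto simp: int_ball_def abs_le_iff)
      then show ?thesis
        by simp
    qed
  qed
  then have "card (int_ball c (r + 1) - int_ball c r) \<le> card {\<lfloor>c + r + 1\<rfloor>, \<lceil>c - r - 1\<rceil>}"
    by (rule card_mono[rotated]) simp
  also have "\<dots> \<le> 2"
    by (simp add: card_insert_le_m1)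
  finally show ?thesis .
qed

definition outer_boundary :: "real \<Rightarrow> ('d::finite \<Rightarrow> real) \<Rightarrow> 'd pt set" where
  "outer_boundary L a = {y. y \<notin> box L a \<and> (\<exists>e\<in>unit_steps. (\<lambda>j. y j + e j) \<in> box L a)}"

definition boundary_slab :: "real \<Rightarrow> ('d::finite \<Rightarrow> real) \<Rightarrow> 'd \<Rightarrow> 'd pt set" where
  "boundary_slab L a j = Pi\<^sub>E UNIV (\<lambda>i. if i = j then int_ball (a j) (L/2 + 1) - int_ball (a j) (L/2)
      else int_ball (a i) (L/2 + 1))"

lemma outer_boundary_subset_slabs: "outer_boundary L a \<subseteq> (\<Union>j. boundary_slab L a j)"
proof
  fix y
  assume y: "y \<in> outer_boundary L a"
  then obtain e where "e \<in> unit_steps" and e: "(\<lambda>j. y j + e j) \<in> box L a"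
    unfolding outer_boundary_def by blast
  from y obtain j where "\<not> \<bar>real_of_int (y j) - a j\<bar> \<le> L / 2"
    unfolding outer_boundary_def box_def by blast
  then have j: "y j \<notin> int_ball (a j) (L/2)"
    by (simp add: int_ball_def)
  have "y i \<in> int_ball (a i) (L/2 + 1)" for i
  proof -
    have "\<bar>real_of_int (y i) + real_of_int (e i) - a i\<bar> \<le> L / 2"
      using e unfolding box_def by auto
    moreover have "\<bar>real_of_int (e i)\<bar> \<le> 1"
      using abs_le_one_if_unit_step[OF \<open>e \<in> unit_steps\<close>, of i] by linarith
    ultimately show ?thesis
      unfolding int_ball_def mem_Collect_eq by (simp only: abs_le_iff) linarith
  qed
  with j have "y \<in> boundary_slab L a j"
    by (simp add: boundary_slab_def PiE_UNIV_domain Pi_iff)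
  then show "y \<in> (\<Union>j. boundary_slab L a j)"
    by blast
qed

lemma finite_boundary_slab: "finite (boundary_slab L a j)"
  unfolding boundary_slab_def by (intro finite_PiE) (auto simp: finite_int_ball)

lemma card_boundary_slab_le:
  fixes a :: "'d::finite \<Rightarrow> real"
  assumes "0 \<le> L"
  shows "real (card (boundary_slab L a j)) \<le> 2 * (L + 3) ^ (CARD('d) - 1)"
proof -
  have ball: "real (card (int_ball c (L/2 + 1))) \<le> L + 3" for c
    using card_int_ball_le[of "L/2 + 1" c] assms by simp
  have "real (card (boundary_slab L a j))
      = real (card (int_ball (a j) (L/2 + 1) - int_ball (a j) (L/2)))
        * (\<Prod>i\<in>UNIV - {j}. real (card (int_ball (a i) (L/2 + 1))))"
    unfolding boundary_slab_def card_PiE[OF finite] of_nat_prod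
    by (subst prod.remove[of UNIV j]) (auto intro!: prod.cong)
  also have "\<dots> \<le> 2 * (\<Prod>i\<in>UNIV - {j}. L + 3)"
    using card_int_shell_le[of "a j" "L/2"] ball assms by (intro mult_mono prod_mono) (auto intro: prod_nonneg)
  also have "\<dots> = 2 * (L + 3) ^ (CARD('d) - 1)"
    by (simp add: card_Diff_singleton)
  finally show ?thesis .
qed

lemma card_outer_boundary_le:
  fixes a :: "'d::finite \<Rightarrow> real"
  assumes "3 \<le> L"
  shows "finite (outer_boundary L a)"
    and "real (card (outer_boundary L a)) \<le> real CARD('d) * 2 ^ CARD('d) * L ^ (CARD('d) - 1)"
proof -
  show "finite (outer_boundary L a)"
    by (rule finite_subset[OF outer_boundary_subset_slabs]) (simp add: finite_boundary_slab)
  have "card (outer_boundary L a) \<le> card (\<Union>j. boundary_slab L a j)"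
    by (rule card_mono[OF _ outer_boundary_subset_slabs]) (simp add: finite_boundary_slab)
  also have "\<dots> \<le> (\<Sum>j\<in>UNIV. card (boundary_slab L a j))"
    by (rule card_UN_le) simp
  finally have "real (card (outer_boundary L a)) \<le> (\<Sum>j\<in>UNIV. real (card (boundary_slab L a j)))"
    unfolding of_nat_sum[symmetric] by (rule of_nat_mono)
  also have "\<dots> \<le> (\<Sum>j\<in>(UNIV::'d set). 2 * (2 * L) ^ (CARD('d) - 1))"
  proof (rule sum_mono)
    fix j
    have "real (card (boundary_slab L a j)) \<le> 2 * (L + 3) ^ (CARD('d) - 1)"
      using card_boundary_slab_le[of L a j] assms by simp
    also have "\<dots> \<le> 2 * (2 * L) ^ (CARD('d) - 1)"
      using assms by (intro mult_left_mono power_mono) auto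
    finally show "real (card (boundary_slab L a j)) \<le> 2 * (2 * L) ^ (CARD('d) - 1)" .
  qed
  also have "\<dots> = real CARD('d) * (2 * 2 ^ (CARD('d) - 1)) * L ^ (CARD('d) - 1)"
    by (simp add: power_mult_distrib)
  also have "2 * 2 ^ (CARD('d) - 1) = (2::real) ^ CARD('d)"
    using power_Suc[of "2::real" "CARD('d) - 1"] by simp
  finally show "real (card (outer_boundary L a)) \<le> real CARD('d) * 2 ^ CARD('d) * L ^ (CARD('d) - 1)" .
qed

lemma abs_le_supnorm: "\<bar>w j\<bar> \<le> supnorm (w :: ('d::finite) pt)"
  unfolding supnorm_def by (rule Max_ge) auto

lemma supnorm_le_translate:
  assumes "e \<in> unit_steps"
  shows "supnorm (y - x) \<le> supnorm ((\<lambda>j. y j + e j) - x) + 1"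
proof -
  have "supnorm (y - x) \<in> range (\<lambda>j. \<bar>(y - x) j\<bar>)"
    unfolding supnorm_def by (rule Max_in) auto
  then obtain j where j: "supnorm (y - x) = \<bar>y j - x j\<bar>"
    by auto
  have "\<bar>y j - x j\<bar> \<le> \<bar>((\<lambda>j. y j + e j) - x) j\<bar> + \<bar>e j\<bar>"
    by simp
  also have "\<dots> \<le> supnorm ((\<lambda>j. y j + e j) - x) + 1"
    by (rule add_mono[OF abs_le_supnorm abs_le_one_if_unit_step[OF assms]])
  finally show ?thesis
    using j by simp
qed

lemma l2norm_le_sqrt_card:
  assumes "finite S" and vanish: "\<And>y. y \<notin> S \<Longrightarrow> r y = 0" and bound: "\<And>y. cmod (r y) \<le> b"
  shows "l2norm r \<le> sqrt (real (card S)) * b"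
proof -
  have "0 \<le> b"
    using bound[of undefined] norm_ge_zero order_trans by blast
  have "(\<Sum>\<^sub>\<infinity>y. (cmod (r y))\<^sup>2) = (\<Sum>\<^sub>\<infinity>y\<in>S. (cmod (r y))\<^sup>2)"
    using vanish by (intro infsum_cong_neutral) auto
  also have "\<dots> = (\<Sum>y\<in>S. (cmod (r y))\<^sup>2)"
    using \<open>finite S\<close> by simp
  also have "\<dots> \<le> (\<Sum>y\<in>S. b\<^sup>2)"
    using bound by (intro sum_mono power_mono) auto
  finally have "l2norm r \<le> sqrt (real (card S) * b\<^sup>2)"
    unfolding l2norm_def by simp
  then show ?thesis
    using \<open>0 \<le> b\<close> by (simp add: real_sqrt_mult)
qed

lemma sqrt_power_eq_powr: "0 < L \<Longrightarrow> sqrt (L ^ n) = L powr (real n / 2)"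
  by (simp add: powr_realpow[symmetric] powr_half_sqrt[symmetric] powr_powr)

lemma le_powr_self:
  fixes L x :: real
  assumes "3 \<le> L" "0 \<le> x"
  shows "x \<le> L powr x"
proof -
  have "1 \<le> ln L"
    using assms(1) exp_le ln_ge_iff[of L 1] by simp
  then have "x \<le> x * ln L"
    using assms(2) by (simp add: mult_le_cancel_left1)
  also have "\<dots> \<le> exp (x * ln L)"
    using exp_ge_add_one_self[of "x * ln L"] by linarith
  also have "\<dots> = L powr x"
    using assms(1) by (simp add: powr_def)
  finally show ?thesis .
qed

lemma powr_mult_exp_eq:
  fixes L c m t :: real
  assumes "0 < L" "0 < t"
  shows "L powr c * exp (- (m * t)) = exp (- (m - c * ln L / t) * t)"
proof -
  have "- (m - c * ln L / t) * t = c * ln L + - (m * t)"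
    using assms(2) by (simp add: field_simps)
  then show ?thesis
    using assms(1) by (simp only: powr_def exp_add) simp
qed

definition boundary_constant :: "'d::finite itself \<Rightarrow> real" where
  "boundary_constant _ =
    real (card (unit_steps :: ('d \<Rightarrow> int) set)) * sqrt (real CARD('d) * 2 ^ CARD('d))"

locale box_eigenpair =
  fixes eps :: real and V :: "('d::finite) pt \<Rightarrow> real" and \<Theta> :: "'d pt set"
    and L :: real and a :: "'d \<Rightarrow> real" and \<phi> :: "'d pt \<Rightarrow> complex" and lam :: real
  assumes eps_pos: "0 < eps" and bounded_V: "bounded (range V)" and box_subset: "box L a \<subseteq> \<Theta>"
    and L_ge: "3 \<le> L"
    and support: "\<And>y. y \<notin> box L a \<Longrightarrow> \<phi> y = 0" and normalized: "l2norm \<phi> = 1"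
    and eigen: "Hrestr eps V (box L a) \<phi> = (\<lambda>y. complex_of_real lam * \<phi> y)"
begin

lemma spectral_distance_le_residual:
  "infdist (complex_of_real lam) (spec eps V \<Theta>)
    \<le> l2norm (\<lambda>y. Hrestr eps V \<Theta> \<phi> y - complex_of_real lam * \<phi> y)"
  using support box_subset by (intro infdist_spec_le_residual bounded_V normalized) blast

lemma residual_eq:
  "Hrestr eps V \<Theta> \<phi> y - complex_of_real lam * \<phi> y
    = (if y \<in> \<Theta> - box L a then - complex_of_real eps * lap \<phi> y else 0)"
proof -
  have "restr (box L a) \<phi> = \<phi>" "restr \<Theta> \<phi> = \<phi>"
    using support box_subset by (auto simp: restr_def fun_eq_iff)
  then have "Hrestr eps V \<Theta> \<phi> y = (if y \<in> \<Theta> then Hop eps V \<phi> y else 0)"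
    and "(if y \<in> box L a then Hop eps V \<phi> y else 0) = complex_of_real lam * \<phi> y"
    using fun_cong[OF eigen, of y] by (simp_all add: Hrestr_def restr_def)
  then show ?thesis
    using support[of y] box_subset by (auto simp: Hop_def)
qed

lemma residual_vanishes_off_outer_boundary:
  "y \<notin> outer_boundary L a \<Longrightarrow> Hrestr eps V \<Theta> \<phi> y - complex_of_real lam * \<phi> y = 0"
  using support unfolding outer_boundary_def by (auto simp: residual_eq lap_eq_sum_unit_steps)

lemma cmod_residual_le_decay:
  assumes x: "x \<in> interior_pts (box L a) \<Theta> (real_of_int t)"
    and decay: "\<And>z. z \<in> box L a \<Longrightarrow> t \<le> supnorm (z - x) \<Longrightarrow> cmod (\<phi> z) \<le> \<beta>" and "0 \<le> \<beta>"
  shows "cmod (Hrestr eps V \<Theta> \<phi> y - complex_of_real lam * \<phi> y)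
    \<le> eps * real (card (unit_steps :: ('d \<Rightarrow> int) set)) * \<beta>"
proof (cases "y \<in> \<Theta> - box L a")
  case True
  have neighbour_small: "cmod (\<phi> (\<lambda>j. y j + e j)) \<le> \<beta>" if "e \<in> unit_steps" for e
  proof (cases "(\<lambda>j. y j + e j) \<in> box L a")
    case inside: True
    \<comment> \<open>\<open>x\<close> lies deeper than \<open>t\<close> inside the box, so every neighbour of an outside point is far from \<open>x\<close>\<close>
    have "t < supnorm (y - x)"
      using x True unfolding interior_pts_def by auto
    then have "t \<le> supnorm ((\<lambda>j. y j + e j) - x)"
      using supnorm_le_translate[OF that, of y x] by linarith
    with inside show ?thesis
      by (rule decay)
  qed (simp add: support \<open>0 \<le> \<beta>\<close>)
  have "cmod (lap \<phi> y) \<le> (\<Sum>e\<in>unit_steps. cmod (\<phi> (\<lambda>j. y j + e j)))"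
    unfolding lap_eq_sum_unit_steps by (rule norm_sum)
  also have "\<dots> \<le> (\<Sum>e\<in>(unit_steps :: ('d \<Rightarrow> int) set). \<beta>)"
    by (rule sum_mono) (rule neighbour_small)
  finally show ?thesis
    using True eps_pos by (simp add: residual_eq norm_mult mult_left_mono)
qed (use eps_pos \<open>0 \<le> \<beta>\<close> in \<open>auto simp: residual_eq\<close>)

lemma residual_le_decay:
  assumes "x \<in> interior_pts (box L a) \<Theta> (real_of_int t)"
    and "\<And>z. z \<in> box L a \<Longrightarrow> t \<le> supnorm (z - x) \<Longrightarrow> cmod (\<phi> z) \<le> \<beta>" and "0 \<le> \<beta>"
  shows "l2norm (\<lambda>y. Hrestr eps V \<Theta> \<phi> y - complex_of_real lam * \<phi> y)
    \<le> eps * boundary_constant TYPE('d) * L powr ((real CARD('d) - 1) / 2) * \<beta>"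
proof -
  have "l2norm (\<lambda>y. Hrestr eps V \<Theta> \<phi> y - complex_of_real lam * \<phi> y)
      \<le> sqrt (real (card (outer_boundary L a))) * (eps * real (card (unit_steps :: ('d \<Rightarrow> int) set)) * \<beta>)"
    using card_outer_boundary_le(1)[OF L_ge] residual_vanishes_off_outer_boundary
      cmod_residual_le_decay[OF assms] by (rule l2norm_le_sqrt_card)
  also have "\<dots> \<le> sqrt (real CARD('d) * 2 ^ CARD('d) * L ^ (CARD('d) - 1))
      * (eps * real (card (unit_steps :: ('d \<Rightarrow> int) set)) * \<beta>)"
    using card_outer_boundary_le(2)[OF L_ge] eps_pos \<open>0 \<le> \<beta>\<close> by (intro mult_right_mono) auto
  also have "sqrt (L ^ (CARD('d) - 1)) = L powr ((real CARD('d) - 1) / 2)"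
    using L_ge by (simp add: sqrt_power_eq_powr of_nat_diff)
  then have "sqrt (real CARD('d) * 2 ^ CARD('d) * L ^ (CARD('d) - 1))
      * (eps * real (card (unit_steps :: ('d \<Rightarrow> int) set)) * \<beta>)
      = eps * boundary_constant TYPE('d) * L powr ((real CARD('d) - 1) / 2) * \<beta>"
    by (simp add: boundary_constant_def real_sqrt_mult)
  finally show ?thesis .
qed

lemma prefactor_le_powr:
  assumes "eps * boundary_constant TYPE('d) + (real CARD('d) - 1) / 2 \<le> C"
  shows "eps * boundary_constant TYPE('d) * L powr ((real CARD('d) - 1) / 2) \<le> L powr C"
proof -
  have "0 \<le> eps * boundary_constant TYPE('d)"
    using eps_pos by (simp add: boundary_constant_def)
  then have "eps * boundary_constant TYPE('d) * L powr ((real CARD('d) - 1) / 2)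
      \<le> L powr (eps * boundary_constant TYPE('d)) * L powr ((real CARD('d) - 1) / 2)"
    using L_ge by (intro mult_right_mono le_powr_self) auto
  also have "\<dots> \<le> L powr C"
    using assms L_ge by (simp add: powr_add[symmetric])
  finally show ?thesis .
qed

lemma residual_le_poly:
  assumes "eps * boundary_constant TYPE('d) + (real CARD('d) - 1) / 2 \<le> C"
    and "x \<in> interior_pts (box L a) \<Theta> (real_of_int (Lprime L))" and "poly_loc L a x \<theta> \<phi>"
  shows "l2norm (\<lambda>y. Hrestr eps V \<Theta> \<phi> y - complex_of_real lam * \<phi> y)
    \<le> C * L powr (- (\<theta> - (real CARD('d) - 1) / 2))"
proof -
  have "l2norm (\<lambda>y. Hrestr eps V \<Theta> \<phi> y - complex_of_real lam * \<phi> y)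
      \<le> eps * boundary_constant TYPE('d) * L powr ((real CARD('d) - 1) / 2) * L powr (- \<theta>)"
    using assms(2,3) by (intro residual_le_decay) (auto simp: poly_loc_def)
  also have "\<dots> = eps * boundary_constant TYPE('d) * L powr (- (\<theta> - (real CARD('d) - 1) / 2))"
    by (simp add: mult.assoc powr_add[symmetric])
  also have "\<dots> \<le> C * L powr (- (\<theta> - (real CARD('d) - 1) / 2))"
  proof (rule mult_right_mono)
    show "eps * boundary_constant TYPE('d) \<le> C"
      by (rule order_trans[OF _ assms(1)]) (simp add: Suc_le_eq)
  qed simp
  finally show ?thesis .
qed

lemma residual_le_subexp:
  assumes "eps * boundary_constant TYPE('d) + (real CARD('d) - 1) / 2 \<le> C"
    and "x \<in> interior_pts (box L a) \<Theta> (real_of_int (Lprime L))" and "subexp_loc L a x s \<phi>"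
  shows "\<exists>c\<^sub>1. c\<^sub>1 \<ge> 1 - C * ln L / L powr s \<and>
    l2norm (\<lambda>y. Hrestr eps V \<Theta> \<phi> y - complex_of_real lam * \<phi> y) \<le> exp (- c\<^sub>1 * L powr s)"
proof -
  have "l2norm (\<lambda>y. Hrestr eps V \<Theta> \<phi> y - complex_of_real lam * \<phi> y)
      \<le> eps * boundary_constant TYPE('d) * L powr ((real CARD('d) - 1) / 2) * exp (- (L powr s))"
    using assms(2,3) by (intro residual_le_decay) (auto simp: subexp_loc_def)
  also have "\<dots> \<le> L powr C * exp (- (L powr s))"
    using prefactor_le_powr[OF assms(1)] by (intro mult_right_mono) auto
  also have "\<dots> = exp (- (1 - C * ln L / L powr s) * L powr s)"
    using L_ge powr_mult_exp_eq[of L "L powr s" C 1] by simp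
  finally show ?thesis
    by blast
qed

lemma residual_le_exp:
  assumes "eps * boundary_constant TYPE('d) + (real CARD('d) - 1) / 2 \<le> C"
    and "0 \<le> m" "0 \<le> \<tau>"
    and "x \<in> interior_pts (box L a) \<Theta> (real_of_int (Ltau L \<tau>))" and "exp_loc L a \<tau> x m \<phi>"
  shows "\<exists>m\<^sub>1. m\<^sub>1 \<ge> m - C * ln L / real_of_int (Ltau L \<tau>) \<and>
    l2norm (\<lambda>y. Hrestr eps V \<Theta> \<phi> y - complex_of_real lam * \<phi> y)
      \<le> exp (- m\<^sub>1 * real_of_int (Ltau L \<tau>))"
proof -
  have "1 \<le> L powr \<tau>"
    using L_ge \<open>0 \<le> \<tau>\<close> by (intro ge_one_powr_ge_zero) auto
  then have "1 \<le> real_of_int (Ltau L \<tau>)"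
    by (simp add: Ltau_def)
  have "cmod (\<phi> z) \<le> exp (- (m * real_of_int (Ltau L \<tau>)))"
    if "z \<in> box L a" "Ltau L \<tau> \<le> supnorm (z - x)" for z
  proof -
    have "cmod (\<phi> z) \<le> exp (- m * real_of_int (supnorm (z - x)))"
      using assms(5) that unfolding exp_loc_def by blast
    also have "\<dots> \<le> exp (- (m * real_of_int (Ltau L \<tau>)))"
      using that(2) \<open>0 \<le> m\<close> by (simp add: mult_left_mono)
    finally show ?thesis .
  qed
  then have "l2norm (\<lambda>y. Hrestr eps V \<Theta> \<phi> y - complex_of_real lam * \<phi> y)
      \<le> eps * boundary_constant TYPE('d) * L powr ((real CARD('d) - 1) / 2)
        * exp (- (m * real_of_int (Ltau L \<tau>)))"
    using assms(4) by (intro residual_le_decay) auto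
  also have "\<dots> \<le> L powr C * exp (- (m * real_of_int (Ltau L \<tau>)))"
    using prefactor_le_powr[OF assms(1)] by (intro mult_right_mono) auto
  also have "\<dots> = exp (- (m - C * ln L / real_of_int (Ltau L \<tau>)) * real_of_int (Ltau L \<tau>))"
    using L_ge \<open>1 \<le> real_of_int (Ltau L \<tau>)\<close> by (intro powr_mult_exp_eq) auto
  finally show ?thesis
    by blast
qed

lemma localization_bounds:
  assumes "eps * boundary_constant TYPE('d) + (real CARD('d) - 1) / 2 \<le> C"
  shows
    "(\<forall>\<theta> x. \<theta> > 0 \<and> x \<in> interior_pts (box L a) \<Theta> (real_of_int (Lprime L)) \<and> poly_loc L a x \<theta> \<phi> \<longrightarrow>
        infdist (complex_of_real lam) (spec eps V \<Theta>)
          \<le> l2norm (\<lambda>y. Hrestr eps V \<Theta> \<phi> y - complex_of_real lam * \<phi> y) \<and>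
        l2norm (\<lambda>y. Hrestr eps V \<Theta> \<phi> y - complex_of_real lam * \<phi> y)
          \<le> C * L powr (- (\<theta> - (real CARD('d) - 1) / 2))) \<and>
    (\<forall>s x. 0 < s \<and> s < 1 \<and> x \<in> interior_pts (box L a) \<Theta> (real_of_int (Lprime L)) \<and> subexp_loc L a x s \<phi> \<longrightarrow>
        infdist (complex_of_real lam) (spec eps V \<Theta>)
          \<le> l2norm (\<lambda>y. Hrestr eps V \<Theta> \<phi> y - complex_of_real lam * \<phi> y) \<and>
        (\<exists>c1. c1 \<ge> 1 - C * ln L / L powr s \<and>
          l2norm (\<lambda>y. Hrestr eps V \<Theta> \<phi> y - complex_of_real lam * \<phi> y) \<le> exp (- c1 * L powr s))) \<and>
    (\<forall>m \<tau> x. m > 0 \<and> 0 < \<tau> \<and> \<tau> < 1 \<and> x \<in> interior_pts (box L a) \<Theta> (real_of_int (Ltau L \<tau>)) \<and>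
        exp_loc L a \<tau> x m \<phi> \<longrightarrow>
        infdist (complex_of_real lam) (spec eps V \<Theta>)
          \<le> l2norm (\<lambda>y. Hrestr eps V \<Theta> \<phi> y - complex_of_real lam * \<phi> y) \<and>
        (\<exists>m1. m1 \<ge> m - C * ln L / real_of_int (Ltau L \<tau>) \<and>
          l2norm (\<lambda>y. Hrestr eps V \<Theta> \<phi> y - complex_of_real lam * \<phi> y)
            \<le> exp (- m1 * real_of_int (Ltau L \<tau>))))"
  using spectral_distance_le_residual residual_le_poly[OF assms] residual_le_subexp[OF assms]
    residual_le_exp[OF assms] by (auto simp: less_imp_le)

end

theorem lemma2p2:
  fixes eps0 :: real
  assumes "eps0 > 0"
  shows "\<exists>C::real. \<forall>(eps::real) (V :: ('d::finite) pt \<Rightarrow> real) (\<Theta> :: 'd pt set) (L::real) (a :: 'd \<Rightarrow> real)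
      (\<phi> :: 'd pt \<Rightarrow> complex) (lam::real).
    0 < eps \<and> eps \<le> eps0 \<and> bounded (range V) \<and> box L a \<subseteq> \<Theta> \<and> L \<ge> 200 \<and>
    (\<forall>y. y \<notin> box L a \<longrightarrow> \<phi> y = 0) \<and> l2norm \<phi> = 1 \<and>
    Hrestr eps V (box L a) \<phi> = (\<lambda>y. complex_of_real lam * \<phi> y)
    \<longrightarrow>
    (\<forall>\<theta> x. \<theta> > 0 \<and> x \<in> interior_pts (box L a) \<Theta> (real_of_int (Lprime L)) \<and> poly_loc L a x \<theta> \<phi> \<longrightarrow>
        infdist (complex_of_real lam) (spec eps V \<Theta>)
          \<le> l2norm (\<lambda>y. Hrestr eps V \<Theta> \<phi> y - complex_of_real lam * \<phi> y) \<and>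
        l2norm (\<lambda>y. Hrestr eps V \<Theta> \<phi> y - complex_of_real lam * \<phi> y)
          \<le> C * L powr (- (\<theta> - (real CARD('d) - 1) / 2))) \<and>
    (\<forall>s x. 0 < s \<and> s < 1 \<and> x \<in> interior_pts (box L a) \<Theta> (real_of_int (Lprime L)) \<and> subexp_loc L a x s \<phi> \<longrightarrow>
        infdist (complex_of_real lam) (spec eps V \<Theta>)
          \<le> l2norm (\<lambda>y. Hrestr eps V \<Theta> \<phi> y - complex_of_real lam * \<phi> y) \<and>
        (\<exists>c1. c1 \<ge> 1 - C * ln L / L powr s \<and>
          l2norm (\<lambda>y. Hrestr eps V \<Theta> \<phi> y - complex_of_real lam * \<phi> y) \<le> exp (- c1 * L powr s))) \<and>
    (\<forall>m \<tau> x. m > 0 \<and> 0 < \<tau> \<and> \<tau> < 1 \<and> x \<in> interior_pts (box L a) \<Theta> (real_of_int (Ltau L \<tau>)) \<and>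
        exp_loc L a \<tau> x m \<phi> \<longrightarrow>
        infdist (complex_of_real lam) (spec eps V \<Theta>)
          \<le> l2norm (\<lambda>y. Hrestr eps V \<Theta> \<phi> y - complex_of_real lam * \<phi> y) \<and>
        (\<exists>m1. m1 \<ge> m - C * ln L / real_of_int (Ltau L \<tau>) \<and>
          l2norm (\<lambda>y. Hrestr eps V \<Theta> \<phi> y - complex_of_real lam * \<phi> y)
            \<le> exp (- m1 * real_of_int (Ltau L \<tau>))))"
proof -
  define C where "C = eps0 * boundary_constant TYPE('d) + (real CARD('d) - 1) / 2"
  have C_ge: "eps * boundary_constant TYPE('d) + (real CARD('d) - 1) / 2 \<le> C" if "eps \<le> eps0" for eps
    unfolding C_def using that by (simp add: boundary_constant_def mult_right_mono)
  show ?thesis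
    by (intro exI[of _ C] allI impI, elim conjE, rule box_eigenpair.localization_bounds)
      (auto simp: box_eigenpair_def C_ge)
qed

end
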